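(* Let $T$ be a tree and $v\in V(T)$. Root $T$ at $v$ and let $\bar T_v$ be a pruning of this rooted tree. Then (a) $v\in\mathcal{A}(T)$ if and only if $|C^2_{\bar T_v}(v)|=0$ and $|C^1_{\bar T_v}(v)|\le 1$; (b) $v\in\mathcal{N}(T)$ if and only if $|C^2_{\bar T_v}(v)|=2$ or $|C^1_{\bar T_v}(v)|+|C^2_{\bar T_v}(v)|\ge 3$.
   Context: All graphs are finite, simple and undirected. A dissociation set of a graph $G$ is a set $F\subseteq V(G)$ such that $G[F]$ has maximum degree at most $1$; a maximum dissociation set is one of maximum cardinality. $\mathcal{A}(G)$ is the set of vertices contained in every maximum dissociation set of $G$; $\mathcal{N}(G)$ is the set of vertices contained in no maximum dissociation set of $G$. In a rooted tree, for a vertex $u$, $C(u)$ is the set of children of $u$, $D[u]$ is the set consisting of $u$ and all its descendants, and $T_u$ is the subtree induced by $D[u]$. A branch vertex is a vertex of degree at least $3$. Pruning: let $T$ be rooted at $v$. While the current tree has a branch vertex different from $v$, choose such a branch vertex $u\ne v$ at maximum distance from $v$; then every proper descendant of $u$ has degree at most $2$, so for each child $w$ of $u$ the subtree $T_w$ is a path with end vertex $w$, and for $i\in\{0,1,2\}$ let $C^i(u)$ be the set of children $w$ of $u$ with $|V(T_w)|\equiv i \pmod 3$. If $|C^2(u)|\ge 1$ or $|C^1(u)|\ge 2$, delete all vertices of $D[u]$; if $|C^2(u)|=0$ and $|C^1(u)|\le 1$, delete all vertices of $D[w]$ for every $w\in C(u)\setminus\{z\}$, where $z$ is the unique vertex of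 $C^1(u)$ if $|C^1(u)|=1$ and an arbitrary child of $u$ otherwise. When no branch vertex other than $v$ remains, the resulting tree is called a pruning of $T$. In the pruning $\bar T_v$, every vertex other than $v$ has degree at most $2$, so for each child $w$ of $v$ in $\bar T_v$ the subtree of $\bar T_v$ induced by $w$ and its descendants is a path with end vertex $w$; for $i\in\{0,1,2\}$, $C^i_{\bar T_v}(v)$ is the set of children $w$ of $v$ in $\bar T_v$ for which this path has a number of vertices congruent to $i$ modulo $3$. *)

theory Defs
  imports Main
begin

text \<open>A subtree occurring during pruning is
  represented by its vertex set S; the current tree is the induced subgraph on S.\<close>

definition simple_graph :: "'a set \<Rightarrow> ('a \<Rightarrow> 'a \<Rightarrow> bool) \<Rightarrow> bool" where
  "simple_graph V E \<longleftrightarrow> finite V \<and> (\<forall>x y. E x y \<longrightarrow> x \<in> V \<and> y \<in> V)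
     \<and> (\<forall>x y. E x y \<longrightarrow> E y x) \<and> (\<forall>x. \<not> E x x)"

definition is_path :: "'a set \<Rightarrow> ('a \<Rightarrow> 'a \<Rightarrow> bool) \<Rightarrow> 'a list \<Rightarrow> bool" where
  "is_path S E xs \<longleftrightarrow> xs \<noteq> [] \<and> distinct xs \<and> set xs \<subseteq> S
     \<and> (\<forall>i. Suc i < length xs \<longrightarrow> E (xs ! i) (xs ! Suc i))"

definition is_cycle :: "'a set \<Rightarrow> ('a \<Rightarrow> 'a \<Rightarrow> bool) \<Rightarrow> 'a list \<Rightarrow> bool" where
  "is_cycle S E xs \<longleftrightarrow> length xs \<ge> 3 \<and> is_path S E xs \<and> E (last xs) (hd xs)"

definition connected_graph :: "'a set \<Rightarrow> ('a \<Rightarrow> 'a \<Rightarrow> bool) \<Rightarrow> bool" where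
  "connected_graph V E \<longleftrightarrow>
     (\<forall>x\<in>V. \<forall>y\<in>V. \<exists>xs. is_path V E xs \<and> hd xs = x \<and> last xs = y)"

definition is_tree :: "'a set \<Rightarrow> ('a \<Rightarrow> 'a \<Rightarrow> bool) \<Rightarrow> bool" where
  "is_tree V E \<longleftrightarrow> simple_graph V E \<and> V \<noteq> {} \<and> connected_graph V E
     \<and> \<not> (\<exists>xs. is_cycle V E xs)"

definition dissociation_set :: "'a set \<Rightarrow> ('a \<Rightarrow> 'a \<Rightarrow> bool) \<Rightarrow> 'a set \<Rightarrow> bool" where
  "dissociation_set V E F \<longleftrightarrow> F \<subseteq> V \<and> (\<forall>x\<in>F. card {y\<in>F. E x y} \<le> 1)"

definition max_dissociation_set :: "'a set \<Rightarrow> ('a \<Rightarrow> 'a \<Rightarrow> bool) \<Rightarrow> 'a set \<Rightarrow> bool" where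
  "max_dissociation_set V E F \<longleftrightarrow> dissociation_set V E F
     \<and> (\<forall>F'. dissociation_set V E F' \<longrightarrow> card F' \<le> card F)"

definition A_set :: "'a set \<Rightarrow> ('a \<Rightarrow> 'a \<Rightarrow> bool) \<Rightarrow> 'a set" where
  "A_set V E = {x\<in>V. \<forall>F. max_dissociation_set V E F \<longrightarrow> x \<in> F}"

definition N_set :: "'a set \<Rightarrow> ('a \<Rightarrow> 'a \<Rightarrow> bool) \<Rightarrow> 'a set" where
  "N_set V E = {x\<in>V. \<forall>F. max_dissociation_set V E F \<longrightarrow> x \<notin> F}"

definition deg :: "'a set \<Rightarrow> ('a \<Rightarrow> 'a \<Rightarrow> bool) \<Rightarrow> 'a \<Rightarrow> nat" where
  "deg S E x = card {y\<in>S. E x y}"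

definition dist :: "'a set \<Rightarrow> ('a \<Rightarrow> 'a \<Rightarrow> bool) \<Rightarrow> 'a \<Rightarrow> 'a \<Rightarrow> nat" where
  "dist S E x y = (LEAST n. \<exists>xs. is_path S E xs \<and> hd xs = x \<and> last xs = y \<and> length xs = Suc n)"

definition desc :: "'a set \<Rightarrow> ('a \<Rightarrow> 'a \<Rightarrow> bool) \<Rightarrow> 'a \<Rightarrow> 'a \<Rightarrow> 'a set" where
  "desc S E v u = {w\<in>S. \<exists>xs. is_path S E xs \<and> hd xs = v \<and> last xs = w \<and> u \<in> set xs}"

definition children :: "'a set \<Rightarrow> ('a \<Rightarrow> 'a \<Rightarrow> bool) \<Rightarrow> 'a \<Rightarrow> 'a \<Rightarrow> 'a set" where
  "children S E v u = {w\<in>S. E u w \<and> dist S E v w = Suc (dist S E v u)}"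

text \<open>C^i(u): children w of u with |V(T_w)| = i mod 3.\<close>
definition children_mod :: "'a set \<Rightarrow> ('a \<Rightarrow> 'a \<Rightarrow> bool) \<Rightarrow> 'a \<Rightarrow> nat \<Rightarrow> 'a \<Rightarrow> 'a set" where
  "children_mod S E v i u = {w\<in>children S E v u. card (desc S E v w) mod 3 = i}"

definition prune_step :: "('a \<Rightarrow> 'a \<Rightarrow> bool) \<Rightarrow> 'a \<Rightarrow> 'a set \<Rightarrow> 'a set \<Rightarrow> bool" where
  "prune_step E v S S' \<longleftrightarrow> (\<exists>u\<in>S. u \<noteq> v \<and> deg S E u \<ge> 3
     \<and> (\<forall>u'\<in>S. u' \<noteq> v \<and> deg S E u' \<ge> 3 \<longrightarrow> dist S E v u' \<le> dist S E v u)
     \<and> (if card (children_mod S E v 2 u) \<ge> 1 \<or> card (children_mod S E v 1 u) \<ge> 2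
        then S' = S - desc S E v u
        else (\<exists>z\<in>children S E v u. (children_mod S E v 1 u \<noteq> {} \<longrightarrow> z \<in> children_mod S E v 1 u)
               \<and> S' = S - \<Union> (desc S E v ` (children S E v u - {z})))))"

definition is_pruning :: "'a set \<Rightarrow> ('a \<Rightarrow> 'a \<Rightarrow> bool) \<Rightarrow> 'a \<Rightarrow> 'a set \<Rightarrow> bool" where
  "is_pruning V E v S \<longleftrightarrow> (prune_step E v)\<^sup>*\<^sup>* V S
     \<and> \<not> (\<exists>u\<in>S. u \<noteq> v \<and> deg S E u \<ge> 3)"

end

(* For a vertex set S of a subtree containing v, compare the largest dissociated
   subsets of S containing v and avoiding v; v lies in every (no) maximum dissociation set
   exactly when the first (second) is strictly larger.

   A pruning step at a deepest branch vertex u deletes a part R of the tree that meets every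
   dissociated set in at most k vertices and contains a dissociated set of k vertices without
   edges to the rest: either the whole subtree of u (when some leg below u has 2 vertices mod 3,
   or two legs have 1 vertex mod 3), or the legs of u with a multiple of 3 vertices, which are
   filled optimally while leaving their top vertex out. Both maxima drop by k, so their
   difference is invariant.

   In the pruned tree every child w of v carries a path with n_w vertices, whose dissociation
   number is n_w - floor (n_w / 3). Computing both maxima there gives the difference
   1 + [C^1 nonempty] - |C^1| - |C^2|, and both characterisations follow. *)

theory Submission
  imports Defs
begin

lemma is_path_Cons:
  "is_path S E (x # xs) \<longleftrightarrow> x \<in> S \<and> x \<notin> set xs \<and> (xs = [] \<or> (is_path S E xs \<and> E x (hd xs)))"
proof -
  have "(\<forall>i. Suc i < length (x#xs) \<longrightarrow> E ((x#xs) ! i) ((x#xs) ! Suc i)) \<longleftrightarrow>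
        (xs \<noteq> [] \<longrightarrow> E x (hd xs)) \<and> (\<forall>i. Suc i < length xs \<longrightarrow> E (xs ! i) (xs ! Suc i))"
  proof
    assume H: "\<forall>i. Suc i < length (x#xs) \<longrightarrow> E ((x#xs) ! i) ((x#xs) ! Suc i)"
    show "(xs \<noteq> [] \<longrightarrow> E x (hd xs)) \<and> (\<forall>i. Suc i < length xs \<longrightarrow> E (xs ! i) (xs ! Suc i))"
    proof
      show "xs \<noteq> [] \<longrightarrow> E x (hd xs)" using H[rule_format, of 0] by (cases xs) auto
      show "\<forall>i. Suc i < length xs \<longrightarrow> E (xs ! i) (xs ! Suc i)" using H[rule_format, of "Suc _"] by auto
    qed
  next
    assume H: "(xs \<noteq> [] \<longrightarrow> E x (hd xs)) \<and> (\<forall>i. Suc i < length xs \<longrightarrow> E (xs ! i) (xs ! Suc i))"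
    show "\<forall>i. Suc i < length (x#xs) \<longrightarrow> E ((x#xs) ! i) ((x#xs) ! Suc i)"
    proof (intro allI impI)
      fix i assume "Suc i < length (x#xs)"
      then show "E ((x#xs) ! i) ((x#xs) ! Suc i)" using H
        by (cases i) (auto simp: hd_conv_nth)
    qed
  qed
  then show ?thesis unfolding is_path_def by auto
qed

lemma is_path_singleton [simp]: "is_path S E [x] \<longleftrightarrow> x \<in> S"
  by (simp add: is_path_Cons)

lemma is_path_append:
  assumes "xs \<noteq> []" "ys \<noteq> []"
  shows "is_path S E (xs @ ys) \<longleftrightarrow>
    is_path S E xs \<and> is_path S E ys \<and> set xs \<inter> set ys = {} \<and> E (last xs) (hd ys)"
  using assms(1)
proof (induction xs)
  case (Cons x xs)
  then show ?case using assms(2) by (cases "xs = []") (auto simp: is_path_Cons)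
qed simp

lemma is_path_prefix: "is_path S E (xs @ ys) \<Longrightarrow> xs \<noteq> [] \<Longrightarrow> is_path S E xs"
  using is_path_append by (cases "ys = []") auto

lemma is_path_suffix: "is_path S E (xs @ ys) \<Longrightarrow> ys \<noteq> [] \<Longrightarrow> is_path S E ys"
  using is_path_append by (cases "xs = []") auto

lemma is_path_snoc:
  "xs \<noteq> [] \<Longrightarrow> is_path S E (xs @ [y]) \<longleftrightarrow> is_path S E xs \<and> y \<in> S \<and> y \<notin> set xs \<and> E (last xs) y"
  by (subst is_path_append) auto

lemma is_path_mono: "is_path S E xs \<Longrightarrow> S \<subseteq> T \<Longrightarrow> is_path T E xs"
  unfolding is_path_def by auto

lemma distinct_hd_eq_last: "distinct xs \<Longrightarrow> xs \<noteq> [] \<Longrightarrow> hd xs = last xs \<Longrightarrow> xs = [hd xs]"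
  by (cases xs) (auto split: if_splits)

definition dissociated :: "('a \<Rightarrow> 'a \<Rightarrow> bool) \<Rightarrow> 'a set \<Rightarrow> bool" where
  "dissociated E F \<longleftrightarrow> (\<forall>x\<in>F. card {y\<in>F. E x y} \<le> 1)"

text \<open>The dissociation number of a path on n vertices: take two vertices out of every three.\<close>
definition path_diss :: "nat \<Rightarrow> nat" where
  "path_diss n = n - n div 3"

lemma nat_mod3_cases:
  fixes n :: nat
  obtains "n = 0" | "n = 1" | "n = 2" | q where "n = 3 * q + 3" | q where "n = 3 * q + 4"
    | q where "n = 3 * q + 5"
proof -
  obtain q r where n: "n = 3 * q + r" and r: "r < 3"
    using div_mult_mod_eq[of n 3] mod_less_divisor[of 3 n]
    by (metis add.commute mult.commute zero_less_numeral)
  have "r = 0 \<or> r = 1 \<or> r = 2" using r by linarith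
  then show ?thesis using that n by (cases q) auto
qed

lemma div3_Suc [simp]: "Suc (3 * q) div 3 = q" "Suc (Suc (3 * q)) div 3 = q" for q :: nat
  by presburger+

lemma path_diss_diff1_le: "path_diss (n - 1) \<le> path_diss n"
  by (cases n rule: nat_mod3_cases) (auto simp: path_diss_def)

lemma path_diss_diff2_le: "2 \<le> n \<Longrightarrow> 1 + path_diss (n - 2) \<le> path_diss n"
  by (cases n rule: nat_mod3_cases) (auto simp: path_diss_def)

lemma path_diss_diff3_le: "2 \<le> n \<Longrightarrow> 2 + path_diss (n - 3) \<le> path_diss n"
  by (cases n rule: nat_mod3_cases) (auto simp: path_diss_def)

lemma path_diss_diff1_mod0: "n mod 3 = 0 \<Longrightarrow> path_diss (n - 1) = path_diss n"
  by (cases n rule: nat_mod3_cases) (auto simp: path_diss_def)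

lemma path_diss_diff2_mod1: "n mod 3 = 1 \<Longrightarrow> 1 + path_diss (n - 2) = path_diss n"
  by (cases n rule: nat_mod3_cases) (auto simp: path_diss_def)

lemma path_diss_diff3_mod2: "n mod 3 = 2 \<Longrightarrow> 2 + path_diss (n - 3) = path_diss n"
  by (cases n rule: nat_mod3_cases) (auto simp: path_diss_def)

lemma path_diss_diff1: "1 \<le> n \<Longrightarrow> path_diss n = path_diss (n - 1) + of_bool (n mod 3 \<noteq> 0)"
  by (cases n rule: nat_mod3_cases) (auto simp: path_diss_def)

lemma path_diss_diff2_le_diff1:
  "1 \<le> n \<Longrightarrow> 1 + path_diss (n - 2) \<le> path_diss (n - 1) + of_bool (n mod 3 = 1)"
  by (cases n rule: nat_mod3_cases) (auto simp: path_diss_def)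

lemma mod3_cases: "(n::nat) mod 3 = 0 \<or> n mod 3 = 1 \<or> n mod 3 = 2"
  by presburger

lemma card_mod3_nonzero:
  "finite A \<Longrightarrow> card {x\<in>A. f x mod 3 \<noteq> 0} = card {x\<in>A. f x mod 3 = 1} + card {x\<in>A. f x mod 3 = 2}"
  for f :: "'b \<Rightarrow> nat"
proof -
  assume "finite A"
  moreover have "{x\<in>A. f x mod 3 \<noteq> 0} = {x\<in>A. f x mod 3 = 1} \<union> {x\<in>A. f x mod 3 = 2}" by auto
  ultimately show ?thesis by (simp add: card_Un_disjoint disjoint_iff)
qed

locale rooted_tree =
  fixes V :: "'a set" and E :: "'a \<Rightarrow> 'a \<Rightarrow> bool" and v :: 'a
  assumes tree: "is_tree V E" and root: "v \<in> V"
begin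

lemma finite_V: "finite V"
  and E_sym: "E x y \<Longrightarrow> E y x"
  and E_irrefl: "\<not> E x x"
  and E_in_V: "E x y \<Longrightarrow> x \<in> V \<and> y \<in> V"
  using tree unfolding is_tree_def simple_graph_def by auto

lemma no_cycle: "\<not> is_cycle V E xs"
  using tree unfolding is_tree_def by auto

lemma connected: "x \<in> V \<Longrightarrow> y \<in> V \<Longrightarrow> \<exists>xs. is_path V E xs \<and> hd xs = x \<and> last xs = y"
  using tree unfolding is_tree_def connected_graph_def by auto

text \<open>Otherwise the part of the path from y' to its end, closed by the edge back to y',
  would be a cycle.\<close>
lemma path_ends_with_nbr:
  assumes p: "is_path V E xs" and y': "y' \<in> set xs" and e: "E y' (last xs)"
  shows "\<exists>ys. xs = ys @ [y', last xs]"
proof -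
  obtain xs1 xs2 where xs: "xs = xs1 @ y' # xs2" using y' split_list by metis
  have ne: "xs2 \<noteq> []" using e E_irrefl xs by auto
  have last: "last xs2 = last xs" using xs ne by simp
  have "xs2 = [last xs]"
  proof (rule ccontr)
    assume "xs2 \<noteq> [last xs]"
    then have "length (y' # xs2) \<ge> 3"
      using ne last by (cases xs2) (auto simp: Suc_le_eq)
    moreover have "is_path V E (y' # xs2)" using p xs is_path_suffix by fastforce
    ultimately have "is_cycle V E (y' # xs2)"
      unfolding is_cycle_def using e E_sym last ne by simp
    then show False using no_cycle by blast
  qed
  then show ?thesis using xs by auto
qed

lemma tree_path_unique:
  assumes "is_path V E ys" "is_path V E xs" "hd xs = hd ys" "last xs = last ys"
  shows "xs = ys"
  using assms
proof (induction ys arbitrary: xs rule: rev_induct)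
  case (snoc y ys0)
  have xs: "xs \<noteq> []" "last xs = y" using snoc.prems unfolding is_path_def by auto
  show ?case
  proof (cases "ys0 = []")
    case True
    then show ?thesis using snoc.prems distinct_hd_eq_last[of xs] unfolding is_path_def by simp
  next
    case False
    define y' where "y' = last ys0"
    have p0: "is_path V E ys0" and y: "y \<notin> set ys0" and e: "E y' y"
      using snoc.prems(1) False is_path_snoc[of ys0 V E y] unfolding y'_def by auto
    have hd: "hd xs = hd ys0" using snoc.prems False by simp
    show ?thesis
    proof (cases "y' \<in> set xs")
      case True
      then obtain zs where zs: "xs = zs @ [y', y]"
        using path_ends_with_nbr[OF snoc.prems(2)] e xs by auto
      have "is_path V E (zs @ [y'])" using snoc.prems(2) zs is_path_prefix[of V E "zs @ [y']" "[y]"] by simp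
      moreover have "hd (zs @ [y']) = hd ys0" using hd zs by (cases zs) auto
      ultimately have "zs @ [y'] = ys0" using snoc.IH[OF p0] unfolding y'_def by simp
      then show ?thesis using zs by simp
    next
      case False
      have "is_path V E (xs @ [y'])"
        using snoc.prems(2) xs False E_sym[OF e] E_in_V[OF e] is_path_snoc[of xs V E y'] by auto
      moreover have "hd (xs @ [y']) = hd ys0" using hd xs by simp
      ultimately have "xs @ [y'] = ys0" using snoc.IH[OF p0] unfolding y'_def by simp
      then show ?thesis using y xs last_in_set by fastforce
    qed
  qed
qed (simp add: is_path_def)

definition root_path :: "'a \<Rightarrow> 'a list" where
  "root_path x = (THE xs. is_path V E xs \<and> hd xs = v \<and> last xs = x)"

lemma root_path: "x \<in> V \<Longrightarrow> is_path V E (root_path x) \<and> hd (root_path x) = v \<and> last (root_path x) = x"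
proof -
  assume x: "x \<in> V"
  obtain xs where xs: "is_path V E xs" "hd xs = v" "last xs = x" using connected[OF root x] by blast
  show ?thesis unfolding root_path_def
    by (rule theI[of _ xs]) (use xs tree_path_unique in auto)
qed

lemma root_path_eqI: "is_path V E xs \<Longrightarrow> hd xs = v \<Longrightarrow> last xs = x \<Longrightarrow> root_path x = xs"
  using root_path[of x] tree_path_unique[of xs "root_path x"] unfolding is_path_def
  by (metis last_in_set subsetD)

definition ancestors :: "'a \<Rightarrow> 'a set" where "ancestors x = set (root_path x)"
definition depth :: "'a \<Rightarrow> nat" where "depth x = length (root_path x) - 1"
definition parent :: "'a \<Rightarrow> 'a" where "parent x = last (butlast (root_path x))"

lemma root_path_nonempty: "x \<in> V \<Longrightarrow> root_path x \<noteq> []"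
  using root_path unfolding is_path_def by auto

lemma root_path_root: "root_path v = [v]"
  by (rule root_path_eqI) (auto simp: root)

lemma ancestors_subset_V: "x \<in> V \<Longrightarrow> ancestors x \<subseteq> V"
  using root_path unfolding ancestors_def is_path_def by auto

lemma self_in_ancestors: "x \<in> V \<Longrightarrow> x \<in> ancestors x"
  using root_path root_path_nonempty unfolding ancestors_def by (metis last_in_set)

lemma root_in_ancestors: "x \<in> V \<Longrightarrow> v \<in> ancestors x"
  using root_path root_path_nonempty unfolding ancestors_def by (metis hd_in_set)

lemma ancestors_root: "ancestors v = {v}"
  by (simp add: ancestors_def root_path_root)

lemma root_path_prefix:
  assumes x: "x \<in> V" and y: "y \<in> ancestors x"
  shows "\<exists>r. root_path x = root_path y @ r"
proof -
  obtain xs1 xs2 where xs: "root_path x = xs1 @ y # xs2"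
    using y unfolding ancestors_def by (meson split_list)
  have p: "is_path V E (root_path x)" "hd (root_path x) = v" using root_path[OF x] by auto
  have "is_path V E (xs1 @ [y])" using p xs is_path_prefix[of V E "xs1 @ [y]" xs2] by simp
  moreover have "hd (xs1 @ [y]) = v" using p xs by (cases xs1) auto
  ultimately have "root_path y = xs1 @ [y]" by (rule root_path_eqI) simp
  then show ?thesis using xs by simp
qed

lemma root_path_parent:
  assumes x: "x \<in> V" and xv: "x \<noteq> v"
  shows "root_path x = root_path (parent x) @ [x] \<and> parent x \<in> V \<and> E (parent x) x"
proof -
  define ys where "ys = butlast (root_path x)"
  have p: "is_path V E (root_path x)" "hd (root_path x) = v" "last (root_path x) = x"
    using root_path[OF x] by auto
  have dec: "root_path x = ys @ [x]"
    using p root_path_nonempty[OF x] unfolding ys_def by (metis append_butlast_last_id)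
  have ys: "ys \<noteq> []" using dec p xv by auto
  have pys: "is_path V E ys" and e: "E (last ys) x"
    using p(1) dec ys is_path_snoc[of ys V E x] by auto
  have "hd ys = v" using p(2) dec ys by simp
  then have "root_path (parent x) = ys" unfolding parent_def ys_def[symmetric]
    using root_path_eqI[OF pys] by blast
  moreover have "parent x \<in> V" using pys ys unfolding parent_def ys_def[symmetric] is_path_def by auto
  ultimately show ?thesis using dec e unfolding parent_def ys_def[symmetric] by simp
qed

lemma ancestors_parent: "x \<in> V \<Longrightarrow> x \<noteq> v \<Longrightarrow> ancestors x = insert x (ancestors (parent x))"
  using root_path_parent unfolding ancestors_def by (metis Un_insert_right empty_set list.set(2) set_append sup_commute insert_is_Un)

lemma depth_parent: "x \<in> V \<Longrightarrow> x \<noteq> v \<Longrightarrow> depth x = Suc (depth (parent x))"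
  using root_path_parent root_path_nonempty unfolding depth_def
  by (metis Suc_pred' length_append_singleton length_greater_0_conv diff_Suc_1)

lemma root_path_nth_depth: "x \<in> V \<Longrightarrow> y \<in> ancestors x \<Longrightarrow> root_path x ! depth y = y"
proof -
  assume x: "x \<in> V" and y: "y \<in> ancestors x"
  obtain r where r: "root_path x = root_path y @ r" using root_path_prefix[OF x y] by blast
  have yV: "y \<in> V" using ancestors_subset_V[OF x] y by auto
  have ne: "root_path y \<noteq> []" using root_path_nonempty[OF yV] .
  have "root_path y ! depth y = y" using root_path[OF yV] ne unfolding depth_def by (simp add: last_conv_nth)
  moreover have "depth y < length (root_path y)" using ne unfolding depth_def by simp
  ultimately show ?thesis using r by (simp add: nth_append)
qed

lemma ancestors_trans: "x \<in> V \<Longrightarrow> y \<in> ancestors x \<Longrightarrow> ancestors y \<subseteq> ancestors x"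
  using root_path_prefix unfolding ancestors_def by fastforce

lemma depth_ancestor_le: "x \<in> V \<Longrightarrow> y \<in> ancestors x \<Longrightarrow> depth y \<le> depth x"
  using root_path_prefix unfolding depth_def by fastforce

lemma ancestor_depth_eq: "x \<in> V \<Longrightarrow> y \<in> ancestors x \<Longrightarrow> depth y = depth x \<Longrightarrow> y = x"
  using root_path_nth_depth self_in_ancestors by metis

lemma edge_parent_cases:
  assumes e: "E x y"
  shows "(y \<noteq> v \<and> parent y = x) \<or> (x \<noteq> v \<and> parent x = y)"
proof -
  have x: "x \<in> V" and y: "y \<in> V" using E_in_V[OF e] by auto
  have p: "is_path V E (root_path x)" "hd (root_path x) = v" "last (root_path x) = x"
    using root_path[OF x] by auto
  show ?thesis
  proof (cases "y \<in> ancestors x")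
    case False
    have "is_path V E (root_path x @ [y])"
      using p root_path_nonempty[OF x] False e y is_path_snoc[of "root_path x" V E y]
      unfolding ancestors_def by auto
    then have "root_path y = root_path x @ [y]"
      by (rule root_path_eqI) (use p root_path_nonempty[OF x] in auto)
    moreover have "y \<noteq> v" using False root_in_ancestors[OF x] by auto
    ultimately show ?thesis using p(3) unfolding parent_def by simp
  next
    case True
    then obtain ys where "root_path x = ys @ [y, last (root_path x)]"
      using path_ends_with_nbr[OF p(1), of y] E_sym[OF e] p(3) unfolding ancestors_def by auto
    then have ys: "root_path x = ys @ [y, x]" using p(3) by simp
    then have "x \<noteq> v" using root_path_root by (cases ys) auto
    then show ?thesis using ys unfolding parent_def by (simp add: butlast_append)
  qed
qed

definition descendants :: "'a \<Rightarrow> 'a set" where "descendants x = {w \<in> V. x \<in> ancestors w}"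
definition child_set :: "'a \<Rightarrow> 'a set" where "child_set x = {w \<in> V. w \<noteq> v \<and> parent w = x}"
text \<open>The vertex sets of the trees that arise during pruning.\<close>
definition rooted_subtree :: "'a set \<Rightarrow> bool" where
  "rooted_subtree S \<longleftrightarrow> v \<in> S \<and> S \<subseteq> V \<and> (\<forall>y\<in>S. ancestors y \<subseteq> S)"

lemma edge_leaving_descendants:
  assumes "y \<in> descendants w" "z \<notin> descendants w" "E y z"
  shows "y = w \<and> z = parent w \<and> w \<noteq> v"
proof -
  have y: "y \<in> V" and z: "z \<in> V" using E_in_V[OF assms(3)] by auto
  have wy: "w \<in> ancestors y" using assms(1) unfolding descendants_def by auto
  from edge_parent_cases[OF assms(3)] show ?thesis
  proof
    assume h: "z \<noteq> v \<and> parent z = y"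
    then have "ancestors z = insert z (ancestors y)" using ancestors_parent[OF z] by auto
    then have "z \<in> descendants w" using wy z unfolding descendants_def by auto
    then show ?thesis using assms(2) by simp
  next
    assume h: "y \<noteq> v \<and> parent y = z"
    then have a: "ancestors y = insert y (ancestors z)" using ancestors_parent[OF y] by auto
    show ?thesis
    proof (cases "w = y")
      case True then show ?thesis using h by auto
    next
      case False
      then have "w \<in> ancestors z" using a wy by auto
      then show ?thesis using assms(2) z unfolding descendants_def by auto
    qed
  qed
qed

lemma child_setD:
  assumes "w \<in> child_set x"
  shows "w \<in> V \<and> x \<in> V \<and> w \<noteq> v \<and> E x w \<and> depth w = Suc (depth x) \<and> x \<in> ancestors w \<and> parent w = x"
proof -
  have w: "w \<in> V" "w \<noteq> v" "parent w = x" using assms unfolding child_set_def by auto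
  then show ?thesis using root_path_parent[OF w(1,2)] depth_parent[OF w(1,2)] ancestors_parent[OF w(1,2)] self_in_ancestors
    by auto
qed

lemma finite_child_set: "finite (child_set x)"
  using finite_V unfolding child_set_def by auto

lemma descendants_subset_V: "descendants x \<subseteq> V" unfolding descendants_def by auto
lemma finite_descendants: "finite (descendants x)" using finite_V descendants_subset_V finite_subset by blast
lemma self_in_descendants: "x \<in> V \<Longrightarrow> x \<in> descendants x" unfolding descendants_def using self_in_ancestors by auto
lemma root_notin_descendants: "w \<noteq> v \<Longrightarrow> v \<notin> descendants w" unfolding descendants_def using ancestors_root by auto
lemma descendants_root: "descendants v = V" unfolding descendants_def using root_in_ancestors by auto

lemma descendants_trans: "y \<in> descendants x \<Longrightarrow> descendants y \<subseteq> descendants x"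
  unfolding descendants_def using ancestors_trans by blast

lemma depth_descendant_less: "y \<in> descendants x \<Longrightarrow> y \<noteq> x \<Longrightarrow> depth x < depth y"
  unfolding descendants_def using depth_ancestor_le ancestor_depth_eq by fastforce

lemma descendants_child_subset: "w \<in> child_set x \<Longrightarrow> descendants w \<subseteq> descendants x"
  using child_setD descendants_trans self_in_descendants unfolding descendants_def by blast

lemma notin_descendants_child: "w \<in> child_set x \<Longrightarrow> x \<notin> descendants w"
  using child_setD depth_descendant_less by fastforce

lemma descendants_children_disjoint:
  assumes "w1 \<in> child_set x" "w2 \<in> child_set x" "w1 \<noteq> w2"
  shows "descendants w1 \<inter> descendants w2 = {}"
proof (rule ccontr)
  assume "descendants w1 \<inter> descendants w2 \<noteq> {}"
  then obtain y where y: "y \<in> V" "w1 \<in> ancestors y" "w2 \<in> ancestors y"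
    unfolding descendants_def by auto
  have "depth w1 = depth w2" using assms child_setD by auto
  then show False
    using root_path_nth_depth[OF y(1) y(2)] root_path_nth_depth[OF y(1) y(3)] assms(3) by metis
qed

lemma child_in_ancestors: "y \<in> V \<Longrightarrow> x \<in> ancestors y \<Longrightarrow> y \<noteq> x \<Longrightarrow> \<exists>w\<in>child_set x. w \<in> ancestors y"
proof (induction "depth y" arbitrary: y rule: less_induct)
  case less
  have yv: "y \<noteq> v" using less.prems ancestors_root by auto
  have a: "ancestors y = insert y (ancestors (parent y))" using ancestors_parent[OF less.prems(1) yv] .
  have pV: "parent y \<in> V" and dp: "depth y = Suc (depth (parent y))"
    using root_path_parent[OF less.prems(1) yv] depth_parent[OF less.prems(1) yv] by auto
  have xp: "x \<in> ancestors (parent y)" using a less.prems by auto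
  show ?case
  proof (cases "parent y = x")
    case True
    then have "y \<in> child_set x" using less.prems(1) yv unfolding child_set_def by auto
    then show ?thesis using self_in_ancestors[OF less.prems(1)] by blast
  next
    case False
    obtain w where "w \<in> child_set x" "w \<in> ancestors (parent y)" using less.hyps[OF _ pV xp False] dp by auto
    then show ?thesis using a by blast
  qed
qed

lemma descendants_decomp: "x \<in> V \<Longrightarrow> descendants x = insert x (\<Union>w\<in>child_set x. descendants w)"
proof
  assume x: "x \<in> V"
  show "descendants x \<subseteq> insert x (\<Union>w\<in>child_set x. descendants w)"
  proof
    fix y assume y: "y \<in> descendants x"
    show "y \<in> insert x (\<Union>w\<in>child_set x. descendants w)"
    proof (cases "y = x")
      case False
      then obtain w where "w \<in> child_set x" "w \<in> ancestors y" using child_in_ancestors y unfolding descendants_def by blast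
      then show ?thesis using y unfolding descendants_def by auto
    qed simp
  qed
  show "insert x (\<Union>w\<in>child_set x. descendants w) \<subseteq> descendants x" using self_in_descendants[OF x] descendants_child_subset by auto
qed

lemma rooted_subtree_finite: "rooted_subtree S \<Longrightarrow> finite S"
  and rooted_subtree_root: "rooted_subtree S \<Longrightarrow> v \<in> S"
  using finite_V finite_subset unfolding rooted_subtree_def by blast+

lemma rooted_subtree_V: "rooted_subtree V" unfolding rooted_subtree_def using root ancestors_subset_V by auto

lemma rooted_subtree_root_path: "rooted_subtree S \<Longrightarrow> y \<in> S \<Longrightarrow> is_path S E (root_path y)"
  using root_path[of y] unfolding rooted_subtree_def is_path_def ancestors_def by auto

lemma rooted_subtree_path_eq: "rooted_subtree S \<Longrightarrow> is_path S E xs \<Longrightarrow> hd xs = v \<Longrightarrow> last xs = y \<Longrightarrow> xs = root_path y"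
  using root_path_eqI is_path_mono unfolding rooted_subtree_def by metis

lemma dist_rooted_subtree: assumes "rooted_subtree S" "y \<in> S" shows "dist S E v y = depth y"
proof -
  have "(\<lambda>n. \<exists>xs. is_path S E xs \<and> hd xs = v \<and> last xs = y \<and> length xs = Suc n) = (\<lambda>n. n = depth y)"
  proof
    fix n
    have yV: "y \<in> V" using assms unfolding rooted_subtree_def by auto
    show "(\<exists>xs. is_path S E xs \<and> hd xs = v \<and> last xs = y \<and> length xs = Suc n) = (n = depth y)"
    proof
      assume "\<exists>xs. is_path S E xs \<and> hd xs = v \<and> last xs = y \<and> length xs = Suc n"
      then obtain xs where xs: "is_path S E xs" "hd xs = v" "last xs = y" "length xs = Suc n" by blast
      then have "xs = root_path y" using rooted_subtree_path_eq[OF assms(1)] by blast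
      then show "n = depth y" using xs(4) unfolding depth_def by simp
    next
      assume n: "n = depth y"
      have "length (root_path y) = Suc n" using root_path_nonempty[OF yV] unfolding n depth_def by (cases "root_path y") auto
      then show "\<exists>xs. is_path S E xs \<and> hd xs = v \<and> last xs = y \<and> length xs = Suc n"
        using rooted_subtree_root_path[OF assms] root_path[OF yV] by blast
    qed
  qed
  then show ?thesis unfolding dist_def by (auto intro!: Least_equality)
qed

lemma desc_rooted_subtree: assumes "rooted_subtree S" shows "desc S E v u = descendants u \<inter> S"
proof -
  have "\<And>w. w \<in> S \<Longrightarrow> (\<exists>xs. is_path S E xs \<and> hd xs = v \<and> last xs = w \<and> u \<in> set xs) \<longleftrightarrow> u \<in> ancestors w"
  proof -
    fix w assume w: "w \<in> S"
    have wV: "w \<in> V" using assms w unfolding rooted_subtree_def by auto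
    show "(\<exists>xs. is_path S E xs \<and> hd xs = v \<and> last xs = w \<and> u \<in> set xs) \<longleftrightarrow> u \<in> ancestors w"
      using rooted_subtree_path_eq[OF assms] rooted_subtree_root_path[OF assms w] root_path[OF wV] unfolding ancestors_def by metis
  qed
  then show ?thesis unfolding desc_def descendants_def using assms unfolding rooted_subtree_def by auto
qed

lemma children_rooted_subtree: assumes "rooted_subtree S" "u \<in> S" shows "children S E v u = child_set u \<inter> S"
proof -
  have uV: "u \<in> V" using assms unfolding rooted_subtree_def by auto
  { fix w assume w: "w \<in> S" "E u w" "depth w = Suc (depth u)"
    have "w \<in> child_set u"
      using edge_parent_cases[OF w(2)] depth_parent[OF uV] w E_in_V[OF w(2)] unfolding child_set_def by auto }
  moreover
  { fix w assume "w \<in> child_set u" "w \<in> S"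
    then have "E u w \<and> depth w = Suc (depth u)" using child_setD by auto }
  ultimately show ?thesis unfolding children_def using dist_rooted_subtree[OF assms(1)] assms(2) by auto
qed

lemma children_mod_rooted_subtree:
  assumes "rooted_subtree S" "u \<in> S"
  shows "children_mod S E v i u = {w \<in> child_set u \<inter> S. card (descendants w \<inter> S) mod 3 = i}"
  unfolding children_mod_def using children_rooted_subtree[OF assms] desc_rooted_subtree[OF assms(1)] by auto

lemma parent_notin_child_set: "x \<in> V \<Longrightarrow> x \<noteq> v \<Longrightarrow> parent x \<notin> child_set x"
proof
  assume x: "x \<in> V" "x \<noteq> v" and p: "parent x \<in> child_set x"
  have "depth (parent x) = Suc (depth x)" using child_setD[OF p] by blast
  moreover have "depth x = Suc (depth (parent x))" using depth_parent[OF x] .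
  ultimately show False by simp
qed

lemma neighbours_rooted_subtree: assumes "rooted_subtree S" "x \<in> S"
  shows "{y \<in> S. E x y} = (if x = v then {} else {parent x}) \<union> (child_set x \<inter> S)"
proof -
  have xV: "x \<in> V" using assms unfolding rooted_subtree_def by auto
  have pS: "parent x \<in> S" if xv: "x \<noteq> v"
  proof -
    have "parent x \<in> ancestors x" using ancestors_parent[OF xV xv] self_in_ancestors root_path_parent[OF xV xv] by blast
    then show ?thesis using assms unfolding rooted_subtree_def by blast
  qed
  show ?thesis
  proof (intro equalityI subsetI)
    fix y assume y: "y \<in> {y \<in> S. E x y}"
    then show "y \<in> (if x = v then {} else {parent x}) \<union> (child_set x \<inter> S)"
      using edge_parent_cases[of x y] E_in_V[of x y] unfolding child_set_def by auto
  next
    fix y assume "y \<in> (if x = v then {} else {parent x}) \<union> (child_set x \<inter> S)"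
    then show "y \<in> {y \<in> S. E x y}"
      using pS root_path_parent[OF xV] E_sym child_setD by (auto split: if_splits)
  qed
qed

lemma deg_rooted_subtree: assumes "rooted_subtree S" "x \<in> S"
  shows "deg S E x = (if x = v then 0 else 1) + card (child_set x \<inter> S)"
proof -
  have xV: "x \<in> V" using assms unfolding rooted_subtree_def by auto
  show ?thesis unfolding deg_def neighbours_rooted_subtree[OF assms]
    using parent_notin_child_set[OF xV] finite_child_set[of x] by auto
qed

lemma rooted_subtree_Diff:
  assumes "rooted_subtree S" "W \<subseteq> V - {v}"
  shows "rooted_subtree (S - (\<Union>w\<in>W. descendants w))"
  unfolding rooted_subtree_def
proof (intro conjI ballI)
  show "v \<in> S - (\<Union>w\<in>W. descendants w)" using assms root_notin_descendants unfolding rooted_subtree_def by auto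
  show "S - (\<Union>w\<in>W. descendants w) \<subseteq> V" using assms unfolding rooted_subtree_def by auto
  fix y assume y: "y \<in> S - (\<Union>w\<in>W. descendants w)"
  have yV: "y \<in> V" using y assms unfolding rooted_subtree_def by auto
  show "ancestors y \<subseteq> S - (\<Union>w\<in>W. descendants w)"
  proof
    fix a assume a: "a \<in> ancestors y"
    have "a \<in> S" using a y assms unfolding rooted_subtree_def by auto
    moreover have "a \<notin> (\<Union>w\<in>W. descendants w)"
    proof
      assume "a \<in> (\<Union>w\<in>W. descendants w)"
      then obtain w where "w \<in> W" "w \<in> ancestors a" unfolding descendants_def by auto
      then have "y \<in> descendants w" using ancestors_trans[OF yV a] yV unfolding descendants_def by auto
      then show False using y \<open>w \<in> W\<close> by auto
    qed
    ultimately show "a \<in> S - (\<Union>w\<in>W. descendants w)" by simp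
  qed
qed

lemma descendants_Int_decomp:
  assumes "rooted_subtree S" "x \<in> S"
  shows "descendants x \<inter> S = insert x (\<Union>w\<in>child_set x \<inter> S. descendants w \<inter> S)"
proof -
  have xV: "x \<in> V" using assms unfolding rooted_subtree_def by auto
  have "descendants w \<inter> S = {}" if "w \<in> child_set x" "w \<notin> S" for w
    using that assms(1) unfolding rooted_subtree_def descendants_def by auto
  then show ?thesis using descendants_decomp[OF xV] assms(2) by auto
qed

lemma card_descendants_Int_pos: "x \<in> S \<Longrightarrow> x \<in> V \<Longrightarrow> 1 \<le> card (descendants x \<inter> S)"
  using self_in_descendants finite_descendants
  by (metis IntI card_0_eq empty_iff finite_Int less_one not_less)

lemma finite_nbrs: "finite {y\<in>H. E x y}"
  using finite_V E_in_V by (metis (no_types, lifting) finite_subset mem_Collect_eq subsetI)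

lemma dissociated_unique_nbr:
  assumes "dissociated E H" "x \<in> H" "a \<in> H" "b \<in> H" "E x a" "E x b"
  shows "a = b"
proof -
  have "{a, b} \<subseteq> {y\<in>H. E x y}" using assms by auto
  then have "card {a, b} \<le> card {y\<in>H. E x y}" using finite_nbrs card_mono by blast
  moreover have "card {y\<in>H. E x y} \<le> 1" using assms unfolding dissociated_def by auto
  ultimately show ?thesis by (cases "a = b") auto
qed

lemma dissociated_subset: "dissociated E F \<Longrightarrow> G \<subseteq> F \<Longrightarrow> dissociated E G"
  unfolding dissociated_def
proof
  fix x assume a: "\<forall>x\<in>F. card {y \<in> F. E x y} \<le> 1" "G \<subseteq> F" "x \<in> G"
  have "card {y \<in> G. E x y} \<le> card {y \<in> F. E x y}" using finite_nbrs a(2) by (intro card_mono) auto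
  then show "card {y \<in> G. E x y} \<le> 1" using a by force
qed

lemma dissociated_singleton: "dissociated E {x}"
proof -
  have "{y\<in>{x}. E x y} = {}" using E_irrefl by auto
  then show ?thesis unfolding dissociated_def by (metis card.empty singletonD zero_le_one)
qed

lemma dissociated_insert:
  assumes "dissociated E G" "card {z\<in>G. E x z} \<le> 1" "\<forall>y\<in>G. E y x \<longrightarrow> {z\<in>G. E y z} = {}"
  shows "dissociated E (insert x G)"
  unfolding dissociated_def
proof
  fix y assume y: "y \<in> insert x G"
  show "card {z \<in> insert x G. E y z} \<le> 1"
  proof (cases "y = x")
    case True
    then have "{z \<in> insert x G. E y z} = {z\<in>G. E x z}" using E_irrefl by auto
    then show ?thesis using assms(2) by simp
  next
    case False
    then have yG: "y \<in> G" using y by auto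
    show ?thesis
    proof (cases "E y x")
      case True
      then have "{z \<in> insert x G. E y z} = {x}" using assms(3) yG by auto
      then show ?thesis by simp
    next
      case False
      then have "{z \<in> insert x G. E y z} = {z\<in>G. E y z}" by auto
      then show ?thesis using assms(1) yG unfolding dissociated_def by simp
    qed
  qed
qed

lemma dissociated_insert_isolated:
  assumes "dissociated E G" "\<forall>z\<in>G. \<not> E x z"
  shows "dissociated E (insert x G)"
proof (rule dissociated_insert[OF assms(1)])
  have "{z\<in>G. E x z} = {}" using assms(2) by auto
  then show "card {z\<in>G. E x z} \<le> 1" by (metis card.empty zero_le_one)
  show "\<forall>y\<in>G. E y x \<longrightarrow> {z\<in>G. E y z} = {}" using assms(2) E_sym by blast
qed

lemma dissociated_insert_partner:
  assumes "dissociated E G" "c \<in> G" "\<forall>z\<in>G. \<not> E c z" "\<forall>z\<in>G. E x z \<longrightarrow> z = c"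
  shows "dissociated E (insert x G)"
proof (rule dissociated_insert[OF assms(1)])
  show "card {z\<in>G. E x z} \<le> 1" using assms(4) by (auto simp: card_le_Suc0_iff_eq finite_nbrs)
  show "\<forall>y\<in>G. E y x \<longrightarrow> {z\<in>G. E y z} = {}" using assms(3,4) E_sym by blast
qed

lemma dissociated_Un:
  assumes "dissociated E A" "dissociated E B" "\<forall>y\<in>B. \<forall>z\<in>A. \<not> E y z"
  shows "dissociated E (A \<union> B)"
  unfolding dissociated_def
proof
  fix y assume y: "y \<in> A \<union> B"
  show "card {z \<in> A \<union> B. E y z} \<le> 1"
  proof (cases "y \<in> B")
    case True
    then have "{z \<in> A \<union> B. E y z} = {z \<in> B. E y z}" using assms(3) by auto
    then show ?thesis using assms(2) True unfolding dissociated_def by simp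
  next
    case False
    then have "{z \<in> A \<union> B. E y z} = {z \<in> A. E y z}" using assms(3) y E_sym by blast
    then show ?thesis using assms(1) y False unfolding dissociated_def by simp
  qed
qed

text \<open>The subtree of x within S is a path starting at x.\<close>
definition leg :: "'a set \<Rightarrow> 'a \<Rightarrow> bool" where
  "leg S x \<longleftrightarrow> x \<in> S \<and> x \<noteq> v \<and> (\<forall>y \<in> descendants x \<inter> S. card (child_set y \<inter> S) \<le> 1)"

text \<open>When \<open>descendants x \<inter> S\<close> induces a path on n vertices starting at x, these are
  the largest intersections of a dissociated set with it: in general, when x is left out,
  and when x is taken together with its parent (so that the child of x must be left out).\<close>
definition leg_bounds :: "'a set \<Rightarrow> 'a \<Rightarrow> nat \<Rightarrow> bool" where
  "leg_bounds S x n \<longleftrightarrow>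
    (\<forall>H. dissociated E H \<longrightarrow> card (H \<inter> (descendants x \<inter> S)) \<le> path_diss n) \<and>
    (\<forall>H. dissociated E H \<longrightarrow> x \<notin> H \<longrightarrow> card (H \<inter> (descendants x \<inter> S)) \<le> path_diss (n - 1)) \<and>
    (\<forall>H. dissociated E H \<longrightarrow> x \<in> H \<longrightarrow> parent x \<in> H \<longrightarrow>
       card (H \<inter> (descendants x \<inter> S)) \<le> 1 + path_diss (n - 2))"

definition leg_witnesses :: "'a set \<Rightarrow> 'a \<Rightarrow> nat \<Rightarrow> bool" where
  "leg_witnesses S x n \<longleftrightarrow>
    (\<exists>G \<subseteq> descendants x \<inter> S. x \<notin> G \<and> dissociated E G \<and> card G = path_diss (n - 1)) \<and>
    (\<exists>G \<subseteq> descendants x \<inter> S. dissociated E G \<and> card G = path_diss n) \<and>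
    (\<exists>G \<subseteq> descendants x \<inter> S. x \<in> G \<and> dissociated E G \<and> (\<forall>z\<in>G. \<not> E x z)
       \<and> card G = 1 + path_diss (n - 2))"

lemma leaf_leg:
  assumes D: "descendants x \<inter> S = {x}"
  shows "leg_bounds S x 1" "leg_witnesses S x 1"
proof -
  have "card (H \<inter> {x}) \<le> 1" for H by (simp add: card_le_Suc0_iff_eq)
  moreover have "H \<inter> {x} = {}" if "x \<notin> H" for H using that by auto
  ultimately show "leg_bounds S x 1" unfolding leg_bounds_def D path_diss_def by simp
  show "leg_witnesses S x 1" unfolding leg_witnesses_def D
  proof (intro conjI)
    show "\<exists>G\<subseteq>{x}. x \<notin> G \<and> dissociated E G \<and> card G = path_diss (1 - 1)"
      by (intro exI[of _ "{}"]) (simp add: dissociated_def path_diss_def)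
    show "\<exists>G\<subseteq>{x}. dissociated E G \<and> card G = path_diss 1"
      using dissociated_singleton by (intro exI[of _ "{x}"]) (simp add: path_diss_def)
    show "\<exists>G\<subseteq>{x}. x \<in> G \<and> dissociated E G \<and> (\<forall>z\<in>G. \<not> E x z) \<and> card G = 1 + path_diss (1 - 2)"
      using dissociated_singleton E_irrefl by (intro exI[of _ "{x}"]) (simp add: path_diss_def)
  qed
qed

lemma single_child_decomp:
  assumes S: "rooted_subtree S" and x: "x \<in> S" and c: "child_set x \<inter> S = {c}"
  shows "descendants x \<inter> S = insert x (descendants c \<inter> S)"
    and "x \<notin> descendants c"
    and "\<And>z. z \<in> descendants c \<Longrightarrow> E x z \<Longrightarrow> z = c"
proof -
  have cx: "c \<in> child_set x" using c by auto
  show "descendants x \<inter> S = insert x (descendants c \<inter> S)"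
    using descendants_Int_decomp[OF S x] c by auto
  show xc: "x \<notin> descendants c" using notin_descendants_child[OF cx] .
  show "z = c" if "z \<in> descendants c" "E x z" for z
    using edge_leaving_descendants[of z c x] that xc E_sym by auto
qed

lemma leg_bounds_extend:
  assumes S: "rooted_subtree S" and x: "x \<in> S" "x \<noteq> v" and c: "child_set x \<inter> S = {c}"
    and m: "m \<ge> 1" and leg_c: "leg_bounds S c m"
  shows "leg_bounds S x (Suc m)"
proof -
  define Dc where "Dc = descendants c \<inter> S"
  have D: "descendants x \<inter> S = insert x Dc" and xDc: "x \<notin> Dc"
    using single_child_decomp[OF S x(1) c] unfolding Dc_def by auto
  have card_H: "card (H \<inter> (descendants x \<inter> S)) = (if x \<in> H then 1 else 0) + card (H \<inter> Dc)" for H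
    using xDc finite_descendants unfolding D Dc_def by (auto simp: Int_insert_left)
  have cx: "c \<in> child_set x" using c by auto
  have parent_c: "parent c = x" and Exc: "E x c" using child_setD[OF cx] by auto
  have Exp: "E x (parent x)" using root_path_parent[of x] x S E_sym unfolding rooted_subtree_def by auto
  have cp: "c \<noteq> parent x" using parent_notin_child_set[of x] cx x S unfolding rooted_subtree_def by auto
  have Bc: "\<And>H. dissociated E H \<Longrightarrow> card (H \<inter> Dc) \<le> path_diss m"
    "\<And>H. dissociated E H \<Longrightarrow> c \<notin> H \<Longrightarrow> card (H \<inter> Dc) \<le> path_diss (m - 1)"
    "\<And>H. dissociated E H \<Longrightarrow> c \<in> H \<Longrightarrow> x \<in> H \<Longrightarrow> card (H \<inter> Dc) \<le> 1 + path_diss (m - 2)"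
    using leg_c parent_c unfolding leg_bounds_def Dc_def by auto
  have "card (H \<inter> (descendants x \<inter> S)) \<le> path_diss (Suc m)" if H: "dissociated E H" for H
  proof (cases "x \<in> H")
    case False
    then show ?thesis using card_H Bc(1)[OF H] path_diss_diff1_le[of "Suc m"] by simp
  next
    case True
    then show ?thesis
      using card_H Bc(2,3)[OF H] m path_diss_diff2_le[of "Suc m"] path_diss_diff3_le[of "Suc m"]
      by (cases "c \<in> H") (auto simp: numeral_2_eq_2 numeral_3_eq_3)
  qed
  moreover have "card (H \<inter> (descendants x \<inter> S)) \<le> 1 + path_diss (m - 1)"
    if H: "dissociated E H" "x \<in> H" "parent x \<in> H" for H
  proof -
    have "c \<notin> H" using dissociated_unique_nbr[OF H(1,2) _ H(3) Exc Exp] cp by auto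
    then show ?thesis using card_H Bc(2)[OF H(1)] H(2) by simp
  qed
  ultimately show ?thesis using card_H Bc(1) unfolding leg_bounds_def by simp
qed

lemma leg_witnesses_extend:
  assumes S: "rooted_subtree S" and x: "x \<in> S" and c: "child_set x \<inter> S = {c}"
    and leg_c: "leg_witnesses S c m"
  shows "leg_witnesses S x (Suc m)"
proof -
  define Dc where "Dc = descendants c \<inter> S"
  have D: "descendants x \<inter> S = insert x Dc" and xDc: "x \<notin> Dc"
    and only_c: "\<And>z. z \<in> Dc \<Longrightarrow> E x z \<Longrightarrow> z = c"
    using single_child_decomp[OF S x c] unfolding Dc_def by auto
  have finDc: "finite Dc" unfolding Dc_def using finite_descendants by auto
  obtain G1 where G1: "G1 \<subseteq> Dc" "dissociated E G1" "card G1 = path_diss m"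
    using leg_c unfolding leg_witnesses_def Dc_def by blast
  obtain G0 where G0: "G0 \<subseteq> Dc" "c \<notin> G0" "dissociated E G0" "card G0 = path_diss (m - 1)"
    using leg_c unfolding leg_witnesses_def Dc_def by blast
  obtain G2 where G2: "G2 \<subseteq> Dc" "c \<in> G2" "dissociated E G2" "\<forall>z\<in>G2. \<not> E c z"
      "card G2 = 1 + path_diss (m - 2)"
    using leg_c unfolding leg_witnesses_def Dc_def by blast
  have without_x: "\<exists>G \<subseteq> insert x Dc. x \<notin> G \<and> dissociated E G \<and> card G = path_diss m"
    using G1 xDc by blast
  have x_G0: "\<forall>z\<in>G0. \<not> E x z" using G0 only_c by blast
  have with_x: "\<exists>G \<subseteq> insert x Dc. x \<in> G \<and> dissociated E G \<and> (\<forall>z\<in>G. \<not> E x z)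
      \<and> card G = 1 + path_diss (m - 1)"
  proof (intro exI[of _ "insert x G0"] conjI)
    show "dissociated E (insert x G0)" using dissociated_insert_isolated[OF G0(3) x_G0] .
    have "x \<notin> G0" using G0(1) xDc by blast
    then show "card (insert x G0) = 1 + path_diss (m - 1)"
      using G0(4) finite_subset[OF G0(1) finDc] by simp
  qed (use G0 x_G0 E_irrefl in auto)
  have "\<exists>G \<subseteq> insert x Dc. dissociated E G \<and> card G = path_diss (Suc m)"
  proof -
    consider "Suc m mod 3 = 0" | "Suc m mod 3 = 1" | "Suc m mod 3 = 2" by linarith
    then show ?thesis
    proof cases
      case 1
      then show ?thesis using without_x path_diss_diff1_mod0[OF 1] by auto
    next
      case 2
      then have "1 + path_diss (m - 1) = path_diss (Suc m)"
        using path_diss_diff2_mod1[OF 2] by (simp add: numeral_2_eq_2)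
      then show ?thesis using with_x by auto
    next
      case 3
      have "\<forall>z\<in>G2. E x z \<longrightarrow> z = c" using G2(1) only_c by blast
      then have "dissociated E (insert x G2)" by (rule dissociated_insert_partner[OF G2(3,2,4)])
      moreover have "x \<notin> G2" using G2(1) xDc by blast
      then have "card (insert x G2) = path_diss (Suc m)"
        using G2(5) finite_subset[OF G2(1) finDc] path_diss_diff3_mod2[OF 3] by simp
      ultimately show ?thesis using G2(1) by blast
    qed
  qed
  then show ?thesis using without_x with_x unfolding leg_witnesses_def D by (simp add: numeral_2_eq_2)
qed

lemma nbrs_UN_children:
  assumes W: "W \<subseteq> child_set c" and h: "\<forall>w\<in>W. h w \<subseteq> descendants w"
    and w: "w \<in> W" and y: "y \<in> h w"
  shows "{z \<in> \<Union>(h ` W). E y z} = {z \<in> h w. E y z}"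
proof (intro equalityI subsetI)
  fix z assume "z \<in> {z \<in> \<Union>(h ` W). E y z}"
  then obtain w' where w': "w' \<in> W" "z \<in> h w'" "E y z" by auto
  show "z \<in> {z \<in> h w. E y z}"
  proof (cases "w' = w")
    case False
    have zD: "z \<in> descendants w'" using w' h by auto
    have "z \<notin> descendants w" using descendants_children_disjoint[of w c w'] W w w'(1) False zD by auto
    then have "z = parent w" using edge_leaving_descendants[of y w z] y h w w'(3) by auto
    then have "z = c" using W w child_setD by auto
    then show ?thesis using zD notin_descendants_child[of w' c] W w'(1) by auto
  qed (use w' in auto)
qed (use w in auto)

lemma card_UN_children:
  assumes W: "W \<subseteq> child_set c" and h: "\<forall>w\<in>W. h w \<subseteq> descendants w"
  shows "card (\<Union>(h ` W)) = (\<Sum>w\<in>W. card (h w))"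
proof (rule card_UN_disjoint)
  show "finite W" using W finite_child_set finite_subset by blast
  show "\<forall>w\<in>W. finite (h w)" using h finite_descendants finite_subset by blast
  show "\<forall>i\<in>W. \<forall>j\<in>W. i \<noteq> j \<longrightarrow> h i \<inter> h j = {}"
    using descendants_children_disjoint W h by blast
qed

lemma dissociated_UN_children:
  assumes W: "W \<subseteq> child_set c" and h: "\<forall>w\<in>W. h w \<subseteq> descendants w \<and> dissociated E (h w)"
  shows "dissociated E (\<Union>(h ` W))"
  unfolding dissociated_def
proof
  fix y assume "y \<in> \<Union>(h ` W)"
  then obtain w where w: "w \<in> W" "y \<in> h w" by auto
  have hsub: "\<forall>w\<in>W. h w \<subseteq> descendants w" using h by blast
  show "card {z \<in> \<Union>(h ` W). E y z} \<le> 1"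
    using nbrs_UN_children[OF W hsub w] h w unfolding dissociated_def by auto
qed

lemma dissociated_insert_UN_children:
  assumes W: "W \<subseteq> child_set c" and h: "\<forall>w\<in>W. h w \<subseteq> descendants w \<and> dissociated E (h w)"
    and isolated: "\<forall>w\<in>W. w \<in> h w \<longrightarrow> (\<forall>z\<in>h w. \<not> E w z)"
    and unique: "\<forall>w1\<in>W. \<forall>w2\<in>W. w1 \<in> h w1 \<longrightarrow> w2 \<in> h w2 \<longrightarrow> w1 = w2"
  shows "dissociated E (insert c (\<Union>(h ` W)))"
proof (rule dissociated_insert[OF dissociated_UN_children[OF W h]])
  have nbr_c: "z = w" if "w \<in> W" "z \<in> h w" "E c z" for w z
    using notin_descendants_child[of w c] edge_leaving_descendants[of z w c] W h E_sym that by auto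
  have fin: "finite {w \<in> W. w \<in> h w}" using finite_subset[OF W finite_child_set] by simp
  have "card {z \<in> \<Union>(h ` W). E c z} \<le> card {w \<in> W. w \<in> h w}"
    by (rule card_mono[OF fin]) (use nbr_c in auto)
  also have "\<dots> \<le> 1" using fin unique by (auto simp: card_le_Suc0_iff_eq)
  finally show "card {z \<in> \<Union>(h ` W). E c z} \<le> 1" .

  show "\<forall>y\<in>\<Union>(h ` W). E y c \<longrightarrow> {z \<in> \<Union>(h ` W). E y z} = {}"
  proof (intro ballI impI)
    fix y assume y: "y \<in> \<Union>(h ` W)" "E y c"
    then obtain w where w: "w \<in> W" "y \<in> h w" by auto
    then have "y = w" using nbr_c y(2) E_sym by blast
    moreover have hsub: "\<forall>w\<in>W. h w \<subseteq> descendants w" using h by blast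
    ultimately show "{z \<in> \<Union>(h ` W). E y z} = {}"
      using nbrs_UN_children[OF W hsub w] isolated w by auto
  qed
qed

lemma leg_profile:
  assumes S: "rooted_subtree S" and "leg S x"
  shows "leg_bounds S x (card (descendants x \<inter> S)) \<and> leg_witnesses S x (card (descendants x \<inter> S))"
  using assms(2)
proof (induction "card (descendants x \<inter> S)" arbitrary: x rule: less_induct)
  case less
  have x: "x \<in> S" "x \<noteq> v" and x_ch: "card (child_set x \<inter> S) \<le> 1"
    using less.prems self_in_descendants S unfolding leg_def rooted_subtree_def by auto
  show ?case
  proof (cases "child_set x \<inter> S = {}")
    case True
    then have "descendants x \<inter> S = {x}" using descendants_Int_decomp[OF S x(1)] by auto
    then show ?thesis using leaf_leg by simp
  next
    case False
    obtain c where c: "child_set x \<inter> S = {c}"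
    proof -
      obtain c where "c \<in> child_set x \<inter> S" using False by blast
      then have "child_set x \<inter> S = {c}"
        using x_ch finite_child_set by (auto simp: card_le_Suc0_iff_eq)
      then show ?thesis using that by blast
    qed
    have D: "descendants x \<inter> S = insert x (descendants c \<inter> S)" and "x \<notin> descendants c"
      using single_child_decomp[OF S x(1) c] by auto
    then have card: "card (descendants x \<inter> S) = Suc (card (descendants c \<inter> S))"
      using finite_descendants by simp
    have "c \<in> child_set x" using c by auto
    then have "leg S c"
      using less.prems c descendants_child_subset child_setD unfolding leg_def by blast
    then have IH: "leg_bounds S c (card (descendants c \<inter> S))" "leg_witnesses S c (card (descendants c \<inter> S))"
      using less.hyps card by auto
    have "card (descendants c \<inter> S) \<ge> 1"
      using card_descendants_Int_pos c child_setD by blast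
    then show ?thesis using leg_bounds_extend[OF S x c _ IH(1)] leg_witnesses_extend[OF S x(1) c IH(2)] card
      by simp
  qed
qed

definition diss_num :: "'a set \<Rightarrow> bool \<Rightarrow> nat" where
  "diss_num S b = Max {card F | F. F \<subseteq> S \<and> dissociated E F \<and> (v \<in> F \<longleftrightarrow> b)}"

lemma diss_num:
  assumes "finite S" "v \<in> S"
  shows "\<exists>F \<subseteq> S. dissociated E F \<and> (v \<in> F \<longleftrightarrow> b) \<and> card F = diss_num S b"
    and "F \<subseteq> S \<Longrightarrow> dissociated E F \<Longrightarrow> (v \<in> F \<longleftrightarrow> b) \<Longrightarrow> card F \<le> diss_num S b"
proof -
  define K where "K = {card F | F. F \<subseteq> S \<and> dissociated E F \<and> (v \<in> F \<longleftrightarrow> b)}"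
  have "K \<subseteq> {0..card S}" unfolding K_def using card_mono[OF assms(1)] by auto
  then have fin: "finite K" using finite_subset by blast
  have "(if b then {v} else {}) \<subseteq> S \<and> dissociated E (if b then {v} else {}) \<and> (v \<in> (if b then {v} else {}) \<longleftrightarrow> b)"
    using assms(2) dissociated_singleton by (simp add: dissociated_def)
  then have "K \<noteq> {}" unfolding K_def by blast
  then have "Max K \<in> K" using fin by simp
  then show "\<exists>F \<subseteq> S. dissociated E F \<and> (v \<in> F \<longleftrightarrow> b) \<and> card F = diss_num S b"
    unfolding diss_num_def K_def[symmetric] unfolding K_def by auto
  show "card F \<le> diss_num S b" if "F \<subseteq> S" "dissociated E F" "v \<in> F \<longleftrightarrow> b"
  proof -
    have "card F \<in> K" unfolding K_def using that by blast
    then show ?thesis using fin unfolding diss_num_def K_def[symmetric] by simp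
  qed
qed

lemma diss_num_eqI:
  assumes "finite S" "v \<in> S"
    and "\<exists>F \<subseteq> S. dissociated E F \<and> (v \<in> F \<longleftrightarrow> b) \<and> card F = m"
    and "\<And>F. F \<subseteq> S \<Longrightarrow> dissociated E F \<Longrightarrow> (v \<in> F \<longleftrightarrow> b) \<Longrightarrow> card F \<le> m"
  shows "diss_num S b = m"
proof -
  obtain F where "F \<subseteq> S" "dissociated E F" "v \<in> F \<longleftrightarrow> b" "card F = m" using assms(3) by blast
  then have "m \<le> diss_num S b" using diss_num(2)[OF assms(1,2)] by blast
  moreover obtain F' where "F' \<subseteq> S" "dissociated E F'" "v \<in> F' \<longleftrightarrow> b" "card F' = diss_num S b"
    using diss_num(1)[OF assms(1,2), where b = b] by blast
  then have "diss_num S b \<le> m" using assms(4) by metis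
  ultimately show ?thesis by simp
qed

lemma diss_num_Diff:
  assumes S: "rooted_subtree S" and S': "rooted_subtree (S - R)" and R: "R \<subseteq> S" "v \<notin> R"
    and G: "G \<subseteq> R" "dissociated E G" "card G = k"
    and bound: "\<And>H. dissociated E H \<Longrightarrow> card (H \<inter> R) \<le> k"
    and isolated: "\<forall>y\<in>G. \<forall>z\<in>S - R. \<not> E y z"
  shows "diss_num S b = diss_num (S - R) b + k"
proof (rule diss_num_eqI)
  show fin: "finite S" and "v \<in> S" using rooted_subtree_finite[OF S] rooted_subtree_root[OF S] .
  have fin': "finite (S - R)" and "v \<in> S - R" using rooted_subtree_finite[OF S'] rooted_subtree_root[OF S'] .
  obtain F' where F': "F' \<subseteq> S - R" "dissociated E F'" "v \<in> F' \<longleftrightarrow> b" "card F' = diss_num (S - R) b"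
    using diss_num(1)[OF fin' \<open>v \<in> S - R\<close>] by blast
  have "\<forall>y\<in>G. \<forall>z\<in>F'. \<not> E y z" using isolated F'(1) by blast
  then have "dissociated E (F' \<union> G)" by (rule dissociated_Un[OF F'(2) G(2)])
  moreover have "finite F'" "finite G"
    using finite_subset[OF F'(1)] finite_subset[OF G(1)] finite_subset[OF R(1) fin] fin by auto
  then have "card (F' \<union> G) = diss_num (S - R) b + k"
    using F'(1,4) G(1,3) by (subst card_Un_disjoint) auto
  ultimately show "\<exists>F \<subseteq> S. dissociated E F \<and> (v \<in> F \<longleftrightarrow> b) \<and> card F = diss_num (S - R) b + k"
    using F' G(1) R by (intro exI[of _ "F' \<union> G"]) auto
  fix F assume F: "F \<subseteq> S" "dissociated E F" "v \<in> F \<longleftrightarrow> b"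
  have "card (F - R) \<le> diss_num (S - R) b"
  proof (rule diss_num(2)[OF fin' \<open>v \<in> S - R\<close>])
    show "dissociated E (F - R)" using dissociated_subset[OF F(2)] by blast
  qed (use F R(2) in auto)
  moreover have "finite F" using F(1) fin by (rule finite_subset)
  then have "card F = card (F - R) + card (F \<inter> R)" using card_Int_Diff[of F R] by simp
  ultimately show "card F \<le> diss_num (S - R) b + k" using bound[OF F(2)] by linarith
qed

context
  fixes S c
  assumes S: "rooted_subtree S" and c: "c \<in> S" and legs: "\<forall>w\<in>child_set c \<inter> S. leg S w"
begin

abbreviation "W \<equiv> child_set c \<inter> S"
abbreviation "N w \<equiv> card (descendants w \<inter> S)"

lemma finite_W: "finite W"
  using finite_child_set by simp

lemma finite_W_filter: "finite {w\<in>W. P w}"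
  using finite_W by (rule finite_subset[rotated]) blast

lemma ex_mod1_iff: "(\<exists>w\<in>W. N w mod 3 = 1) \<longleftrightarrow> card {w\<in>W. N w mod 3 = 1} \<ge> 1"
  using finite_W_filter[of "\<lambda>w. N w mod 3 = 1"] by (auto simp: Suc_le_eq card_gt_0_iff)

lemma bounds_W: "w \<in> W \<Longrightarrow> leg_bounds S w (N w)"
  and witnesses_W: "w \<in> W \<Longrightarrow> leg_witnesses S w (N w)"
  using leg_profile[OF S] legs by auto

lemma N_pos: "w \<in> W \<Longrightarrow> 1 \<le> N w"
  using card_descendants_Int_pos child_setD by blast

lemma card_Int_spider:
  "card (H \<inter> (descendants c \<inter> S)) = of_bool (c \<in> H) + (\<Sum>w\<in>W. card (H \<inter> (descendants w \<inter> S)))"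
proof -
  have "card (\<Union>w\<in>W. H \<inter> (descendants w \<inter> S)) = (\<Sum>w\<in>W. card (H \<inter> (descendants w \<inter> S)))"
    by (rule card_UN_children) auto
  moreover have "c \<notin> (\<Union>w\<in>W. H \<inter> (descendants w \<inter> S))" using notin_descendants_child by auto
  moreover have "finite (\<Union>w\<in>W. H \<inter> (descendants w \<inter> S))" using finite_W finite_descendants by auto
  moreover have "H \<inter> (descendants c \<inter> S) =
      (if c \<in> H then insert c (\<Union>w\<in>W. H \<inter> (descendants w \<inter> S)) else (\<Union>w\<in>W. H \<inter> (descendants w \<inter> S)))"
    using descendants_Int_decomp[OF S c] by auto
  ultimately show ?thesis by simp
qed

lemma spider_bound_without_centre:
  "dissociated E H \<Longrightarrow> c \<notin> H \<Longrightarrow> card (H \<inter> (descendants c \<inter> S)) \<le> (\<Sum>w\<in>W. path_diss (N w))"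
  using card_Int_spider[of H] bounds_W unfolding leg_bounds_def by (auto intro: sum_mono)

text \<open>A dissociated set containing c contains at most one child w of c, and then has at most
  \<open>1 + path_diss (N w - 2)\<close> vertices in the leg of w; this exceeds \<open>path_diss (N w - 1)\<close>
  only when N w is 1 modulo 3.\<close>
lemma spider_bound_with_centre:
  assumes H: "dissociated E H" and cH: "c \<in> H"
  shows "card (H \<inter> (descendants c \<inter> S)) \<le>
    1 + (\<Sum>w\<in>W. path_diss (N w - 1)) + of_bool (\<exists>w\<in>W. N w mod 3 = 1)"
proof -
  define k where "k w = card (H \<inter> (descendants w \<inter> S))" for w
  have unique: "w1 = w2" if "w1 \<in> W \<inter> H" "w2 \<in> W \<inter> H" for w1 w2
    using dissociated_unique_nbr[OF H cH, of w1 w2] that child_setD by auto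
  have k_out: "k w \<le> path_diss (N w - 1)" if "w \<in> W" "w \<notin> H" for w
    using bounds_W[OF that(1)] H that(2) unfolding leg_bounds_def k_def by auto
  have "(\<Sum>w\<in>W. k w) \<le> (\<Sum>w\<in>W. path_diss (N w - 1)) + of_bool (\<exists>w\<in>W. N w mod 3 = 1)"
  proof (cases "W \<inter> H = {}")
    case True
    then have "(\<Sum>w\<in>W. k w) \<le> (\<Sum>w\<in>W. path_diss (N w - 1))" using k_out by (intro sum_mono) auto
    then show ?thesis by simp
  next
    case False
    then obtain j where j: "j \<in> W" "j \<in> H" by auto
    have "k j \<le> 1 + path_diss (N j - 2)"
      using bounds_W[OF j(1)] H j(2) cH child_setD[of j c] j(1) unfolding leg_bounds_def k_def by auto
    also have "\<dots> \<le> path_diss (N j - 1) + of_bool (\<exists>w\<in>W. N w mod 3 = 1)"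
    proof -
      have "of_bool (N j mod 3 = 1) \<le> (of_bool (\<exists>w\<in>W. N w mod 3 = 1) :: nat)" using j(1) by auto
      then show ?thesis using path_diss_diff2_le_diff1[OF N_pos[OF j(1)]] by linarith
    qed
    finally have kj: "k j \<le> path_diss (N j - 1) + of_bool (\<exists>w\<in>W. N w mod 3 = 1)" .
    have "(\<Sum>w\<in>W - {j}. k w) \<le> (\<Sum>w\<in>W - {j}. path_diss (N w - 1))"
      using k_out unique j by (intro sum_mono) auto
    then show ?thesis
      using kj sum.remove[OF finite_W j(1), of k] sum.remove[OF finite_W j(1), of "\<lambda>w. path_diss (N w - 1)"]
      by linarith
  qed
  then show ?thesis using card_Int_spider[of H] cH unfolding k_def by simp
qed

lemma sum_path_diss_legs:
  "(\<Sum>w\<in>W. path_diss (N w)) = (\<Sum>w\<in>W. path_diss (N w - 1)) + card {w\<in>W. N w mod 3 \<noteq> 0}"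
proof -
  have "(\<Sum>w\<in>W. path_diss (N w)) = (\<Sum>w\<in>W. path_diss (N w - 1) + of_bool (N w mod 3 \<noteq> 0))"
    using path_diss_diff1 N_pos by (intro sum.cong) auto
  also have "\<dots> = (\<Sum>w\<in>W. path_diss (N w - 1)) + card {w\<in>W. N w mod 3 \<noteq> 0}"
    using finite_W by (simp add: sum.distrib Int_def)
  finally show ?thesis .
qed

lemma choose_witnesses_without_top:
  obtains g where "\<forall>w\<in>W. g w \<subseteq> descendants w \<inter> S \<and> w \<notin> g w \<and> dissociated E (g w)
    \<and> card (g w) = path_diss (N w - 1)"
proof -
  have "\<forall>w\<in>W. \<exists>G. G \<subseteq> descendants w \<inter> S \<and> w \<notin> G \<and> dissociated E G
      \<and> card G = path_diss (N w - 1)"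
    using witnesses_W unfolding leg_witnesses_def by blast
  then show ?thesis using that by metis
qed

lemma choose_witnesses:
  obtains g where "\<forall>w\<in>W. g w \<subseteq> descendants w \<inter> S \<and> dissociated E (g w) \<and> card (g w) = path_diss (N w)"
proof -
  have "\<forall>w\<in>W. \<exists>G. G \<subseteq> descendants w \<inter> S \<and> dissociated E G \<and> card G = path_diss (N w)"
    using witnesses_W unfolding leg_witnesses_def by blast
  then show ?thesis using that by metis
qed

lemma choose_witnesses_with_top:
  obtains g where "\<forall>w\<in>W. g w \<subseteq> descendants w \<inter> S \<and> w \<in> g w \<and> dissociated E (g w)
    \<and> (\<forall>z\<in>g w. \<not> E w z) \<and> card (g w) = 1 + path_diss (N w - 2)"
proof -
  have "\<forall>w\<in>W. \<exists>G. G \<subseteq> descendants w \<inter> S \<and> w \<in> G \<and> dissociated E G \<and> (\<forall>z\<in>G. \<not> E w z)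
      \<and> card G = 1 + path_diss (N w - 2)"
    using witnesses_W unfolding leg_witnesses_def by blast
  then show ?thesis using that by metis
qed

lemma spider_witness_without_centre:
  "\<exists>G \<subseteq> descendants c \<inter> S. c \<notin> G \<and> dissociated E G \<and> card G = (\<Sum>w\<in>W. path_diss (N w))"
proof -
  obtain g where g: "\<forall>w\<in>W. g w \<subseteq> descendants w \<inter> S \<and> dissociated E (g w) \<and> card (g w) = path_diss (N w)"
    by (rule choose_witnesses)
  have g': "\<forall>w\<in>W. g w \<subseteq> descendants w \<and> dissociated E (g w)" using g by auto
  show ?thesis
  proof (intro exI[of _ "\<Union>(g ` W)"] conjI)
    show "\<Union>(g ` W) \<subseteq> descendants c \<inter> S" using g descendants_Int_decomp[OF S c] by blast
    show "c \<notin> \<Union>(g ` W)" using g' notin_descendants_child by blast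
    show "dissociated E (\<Union>(g ` W))" using dissociated_UN_children[of W c g] g' by auto
    show "card (\<Union>(g ` W)) = (\<Sum>w\<in>W. path_diss (N w))" using card_UN_children[of W c g] g' g by auto
  qed
qed

text \<open>Take c, the witnesses avoiding the children, except for the children in J, where the
  witness containing the child but none of its neighbours is taken instead.\<close>
lemma spider_witness_with_centre_gen:
  assumes JW: "J \<subseteq> W" and J1: "card J \<le> 1" and J_mod: "\<forall>w\<in>J. N w mod 3 = 1"
  shows "\<exists>G \<subseteq> descendants c \<inter> S. c \<in> G \<and> dissociated E G
     \<and> card G = 1 + (\<Sum>w\<in>W. path_diss (N w - 1)) + card J"
proof -
  obtain g0 where g0: "\<forall>w\<in>W. g0 w \<subseteq> descendants w \<inter> S \<and> w \<notin> g0 w \<and> dissociated E (g0 w)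
      \<and> card (g0 w) = path_diss (N w - 1)"
    by (rule choose_witnesses_without_top)
  obtain g2 where g2: "\<forall>w\<in>W. g2 w \<subseteq> descendants w \<inter> S \<and> w \<in> g2 w \<and> dissociated E (g2 w)
      \<and> (\<forall>z\<in>g2 w. \<not> E w z) \<and> card (g2 w) = 1 + path_diss (N w - 2)"
    by (rule choose_witnesses_with_top)
  have finJ: "finite J" using JW finite_W finite_subset by blast
  define h where "h w = (if w \<in> J then g2 w else g0 w)" for w
  have h: "\<forall>w\<in>W. h w \<subseteq> descendants w \<inter> S \<and> dissociated E (h w)" using g0 g2 unfolding h_def by auto
  then have h': "\<forall>w\<in>W. h w \<subseteq> descendants w \<and> dissociated E (h w)" by blast
  have card_h: "card (h w) = path_diss (N w - 1) + of_bool (w \<in> J)" if "w \<in> W" for w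
  proof (cases "w \<in> J")
    case True
    then show ?thesis using g2 that J_mod path_diss_diff2_mod1 path_diss_diff1[OF N_pos[OF that]]
      unfolding h_def by auto
  qed (use g0 that h_def in auto)
  have "card (\<Union>(h ` W)) = (\<Sum>w\<in>W. path_diss (N w - 1) + of_bool (w \<in> J))"
    using card_UN_children[of W c h] h' card_h by auto
  also have "\<dots> = (\<Sum>w\<in>W. path_diss (N w - 1)) + card J"
    using finite_W JW by (simp add: sum.distrib Int_absorb1)
  finally have card_U: "card (\<Union>(h ` W)) = (\<Sum>w\<in>W. path_diss (N w - 1)) + card J" .
  have "dissociated E (insert c (\<Union>(h ` W)))"
  proof (rule dissociated_insert_UN_children[of W c h])
    show "\<forall>w\<in>W. w \<in> h w \<longrightarrow> (\<forall>z\<in>h w. \<not> E w z)" using g0 g2 unfolding h_def by auto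
    have "w \<in> J" if "w \<in> W" "w \<in> h w" for w using that g0 unfolding h_def by (auto split: if_splits)
    then show "\<forall>w1\<in>W. \<forall>w2\<in>W. w1 \<in> h w1 \<longrightarrow> w2 \<in> h w2 \<longrightarrow> w1 = w2"
      using J1 finJ by (auto simp: card_le_Suc0_iff_eq)
  qed (use h' in auto)
  moreover have "c \<notin> \<Union>(h ` W)" using h' notin_descendants_child by blast
  moreover have "finite (\<Union>(h ` W))" using finite_W h finite_descendants finite_subset by (metis finite_UN_I finite_Int)
  moreover have "insert c (\<Union>(h ` W)) \<subseteq> descendants c \<inter> S"
    using h descendants_Int_decomp[OF S c] by blast
  ultimately show ?thesis using card_U by (intro exI[of _ "insert c (\<Union>(h ` W))"]) auto
qed

lemma spider_witness_with_centre:
  "\<exists>G \<subseteq> descendants c \<inter> S. c \<in> G \<and> dissociated E G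
     \<and> card G = 1 + (\<Sum>w\<in>W. path_diss (N w - 1)) + of_bool (\<exists>w\<in>W. N w mod 3 = 1)"
proof (cases "\<exists>w\<in>W. N w mod 3 = 1")
  case True
  then obtain j where "j \<in> W" "N j mod 3 = 1" by blast
  then show ?thesis using spider_witness_with_centre_gen[of "{j}"] True by simp
qed (use spider_witness_with_centre_gen[of "{}"] in simp)

lemma remove_branch:
  assumes cv: "c \<noteq> v"
    and branch: "card {w\<in>W. N w mod 3 = 2} \<ge> 1 \<or> card {w\<in>W. N w mod 3 = 1} \<ge> 2"
  shows "rooted_subtree (S - descendants c) \<and> (\<exists>k. \<forall>b. diss_num S b = diss_num (S - descendants c) b + k)"
proof -
  have many: "1 + of_bool (\<exists>w\<in>W. N w mod 3 = 1) \<le> card {w\<in>W. N w mod 3 \<noteq> 0}"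
    using branch ex_mod1_iff card_mod3_nonzero[OF finite_W, of N] by auto
  define R where "R = descendants c \<inter> S"
  have SR: "S - R = S - descendants c" unfolding R_def by auto
  have cV: "c \<in> V" using S c unfolding rooted_subtree_def by auto
  have "rooted_subtree (S - (\<Union>w\<in>{c}. descendants w))"
    using cV cv by (intro rooted_subtree_Diff[OF S]) auto
  then have S': "rooted_subtree (S - R)" unfolding SR by simp
  obtain G where G: "G \<subseteq> R" "c \<notin> G" "dissociated E G" "card G = (\<Sum>w\<in>W. path_diss (N w))"
    using spider_witness_without_centre unfolding R_def by blast
  have "card (H \<inter> R) \<le> card G" if H: "dissociated E H" for H
  proof (cases "c \<in> H")
    case False
    then show ?thesis using spider_bound_without_centre[OF H] G(4) unfolding R_def by simp
  next
    case True
    have "card (H \<inter> R) \<le> 1 + (\<Sum>w\<in>W. path_diss (N w - 1)) + of_bool (\<exists>w\<in>W. N w mod 3 = 1)"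
      using spider_bound_with_centre[OF H True] unfolding R_def .
    also have "\<dots> \<le> (\<Sum>w\<in>W. path_diss (N w))" using sum_path_diss_legs many by simp
    finally show ?thesis using G(4) by simp
  qed
  moreover have "\<forall>y\<in>G. \<forall>z\<in>S - R. \<not> E y z"
  proof (intro ballI notI)
    fix y z assume "y \<in> G" "z \<in> S - R" "E y z"
    then have "y = c" using G(1) edge_leaving_descendants[of y c z] unfolding R_def by auto
    then show False using \<open>y \<in> G\<close> G(2) by simp
  qed
  moreover have "R \<subseteq> S" "v \<notin> R" unfolding R_def using root_notin_descendants[OF cv] by auto
  ultimately have "diss_num S b = diss_num (S - R) b + card G" for b
    by (intro diss_num_Diff[OF S S' _ _ G(1,3) refl]) auto
  then show ?thesis using S' unfolding SR by blast
qed

text \<open>A leg with a multiple of 3 vertices attains its maximum while avoiding its top vertex,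
  the only one adjacent to the rest of the tree.\<close>
lemma remove_legs_mod0:
  assumes W': "W' \<subseteq> W" and zero: "\<forall>w\<in>W'. N w mod 3 = 0"
  shows "rooted_subtree (S - (\<Union>w\<in>W'. descendants w))
    \<and> (\<exists>k. \<forall>b. diss_num S b = diss_num (S - (\<Union>w\<in>W'. descendants w)) b + k)"
proof -
  define R where "R = (\<Union>w\<in>W'. descendants w \<inter> S)"
  have SR: "S - R = S - (\<Union>w\<in>W'. descendants w)" unfolding R_def by auto
  have W'ch: "W' \<subseteq> child_set c" using W' by auto
  have "W' \<subseteq> V - {v}" using W'ch unfolding child_set_def by auto
  then have S': "rooted_subtree (S - R)" unfolding SR by (rule rooted_subtree_Diff[OF S])
  obtain g where g: "\<forall>w\<in>W'. g w \<subseteq> descendants w \<inter> S \<and> w \<notin> g w \<and> dissociated E (g w)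
      \<and> card (g w) = path_diss (N w - 1)"
    using choose_witnesses_without_top W' by (metis subsetD)
  have g': "\<forall>w\<in>W'. g w \<subseteq> descendants w \<and> dissociated E (g w)" using g by blast
  define G where "G = \<Union>(g ` W')"
  have "card G = (\<Sum>w\<in>W'. card (g w))"
    unfolding G_def using card_UN_children[OF W'ch] g' by blast
  also have "\<dots> = (\<Sum>w\<in>W'. path_diss (N w))"
    using g zero path_diss_diff1_mod0 by (intro sum.cong) auto
  finally have card_G: "card G = (\<Sum>w\<in>W'. path_diss (N w))" .
  have "card (H \<inter> R) \<le> card G" if H: "dissociated E H" for H
  proof -
    have "card (H \<inter> R) = (\<Sum>w\<in>W'. card (H \<inter> (descendants w \<inter> S)))"
      unfolding R_def Int_UN_distrib by (rule card_UN_children[OF W'ch]) auto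
    also have "\<dots> \<le> (\<Sum>w\<in>W'. path_diss (N w))"
      using bounds_W W' H unfolding leg_bounds_def by (intro sum_mono) blast
    finally show ?thesis using card_G by simp
  qed
  moreover have "\<forall>y\<in>G. \<forall>z\<in>S - R. \<not> E y z"
  proof (intro ballI notI)
    fix y z assume y: "y \<in> G" and z: "z \<in> S - R" and e: "E y z"
    obtain w where w: "w \<in> W'" "y \<in> g w" using y unfolding G_def by auto
    then have "y \<in> descendants w" "z \<notin> descendants w" using g z unfolding R_def by auto
    then have "y = w" using edge_leaving_descendants[OF _ _ e] by blast
    then show False using g w by auto
  qed
  moreover have "G \<subseteq> R" unfolding G_def R_def using g by blast
  moreover have "dissociated E G" unfolding G_def using dissociated_UN_children[OF W'ch g'] .
  moreover have "R \<subseteq> S" "v \<notin> R"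
    unfolding R_def using root_notin_descendants W' child_setD by auto
  ultimately have "diss_num S b = diss_num (S - R) b + card G" for b
    by (intro diss_num_Diff[OF S S']) auto
  then show ?thesis using S' unfolding SR by blast
qed

lemma remove_siblings:
  assumes z: "z \<in> W" "{w\<in>W. N w mod 3 = 1} \<noteq> {} \<longrightarrow> N z mod 3 = 1"
    and few: "card {w\<in>W. N w mod 3 = 2} = 0" "card {w\<in>W. N w mod 3 = 1} \<le> 1"
  shows "rooted_subtree (S - (\<Union>w\<in>W - {z}. descendants w))
    \<and> (\<exists>k. \<forall>b. diss_num S b = diss_num (S - (\<Union>w\<in>W - {z}. descendants w)) b + k)"
proof (rule remove_legs_mod0)
  have "{w\<in>W. N w mod 3 = 2} = {}" using few(1) finite_W_filter[of "\<lambda>w. N w mod 3 = 2"] by simp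
  moreover have "{w\<in>W. N w mod 3 = 1} \<subseteq> {z}"
    using z few(2) card_le_Suc0_iff_eq[OF finite_W_filter[of "\<lambda>w. N w mod 3 = 1"]] by auto
  ultimately show "\<forall>w\<in>W - {z}. N w mod 3 = 0" using mod3_cases by blast
qed auto

lemma spider_diss_num:
  assumes cv: "c = v"
  shows "diss_num S False = (\<Sum>w\<in>W. path_diss (N w))"
    and "diss_num S True = 1 + (\<Sum>w\<in>W. path_diss (N w - 1)) + of_bool (\<exists>w\<in>W. N w mod 3 = 1)"
proof -
  have DS: "descendants c \<inter> S = S" using descendants_root S cv unfolding rooted_subtree_def by auto
  have fin: "finite S" and vS: "v \<in> S" using rooted_subtree_finite[OF S] rooted_subtree_root[OF S] .
  show "diss_num S False = (\<Sum>w\<in>W. path_diss (N w))"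
  proof (rule diss_num_eqI[OF fin vS])
    show "\<exists>F\<subseteq>S. dissociated E F \<and> (v \<in> F) = False \<and> card F = (\<Sum>w\<in>W. path_diss (N w))"
      using spider_witness_without_centre unfolding DS cv by blast
    show "card F \<le> (\<Sum>w\<in>W. path_diss (N w))" if "F \<subseteq> S" "dissociated E F" "(v \<in> F) = False" for F
      using spider_bound_without_centre[of F] that DS cv by (simp add: Int_absorb2)
  qed
  show "diss_num S True = 1 + (\<Sum>w\<in>W. path_diss (N w - 1)) + of_bool (\<exists>w\<in>W. N w mod 3 = 1)"
  proof (rule diss_num_eqI[OF fin vS])
    show "\<exists>F\<subseteq>S. dissociated E F \<and> (v \<in> F) = True
        \<and> card F = 1 + (\<Sum>w\<in>W. path_diss (N w - 1)) + of_bool (\<exists>w\<in>W. N w mod 3 = 1)"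
      using spider_witness_with_centre unfolding DS cv by blast
    show "card F \<le> 1 + (\<Sum>w\<in>W. path_diss (N w - 1)) + of_bool (\<exists>w\<in>W. N w mod 3 = 1)"
      if "F \<subseteq> S" "dissociated E F" "(v \<in> F) = True" for F
      using spider_bound_with_centre[of F] that DS cv by (simp add: Int_absorb2)
  qed
qed

end

lemma legs_below:
  assumes S: "rooted_subtree S" and x: "x \<in> S"
    and low: "\<And>y. y \<in> descendants x \<inter> S \<Longrightarrow> y \<noteq> x \<Longrightarrow> deg S E y < 3"
  shows "\<forall>w\<in>child_set x \<inter> S. leg S w"
proof
  fix w assume w: "w \<in> child_set x \<inter> S"
  have wv: "w \<noteq> v" using w unfolding child_set_def by auto
  have "card (child_set y \<inter> S) \<le> 1" if y: "y \<in> descendants w \<inter> S" for y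
  proof -
    have "y \<in> descendants x" "y \<noteq> x"
      using descendants_child_subset notin_descendants_child w y by auto
    then have "deg S E y < 3" using low y by blast
    moreover have "y \<noteq> v" using root_notin_descendants[OF wv] y by auto
    ultimately show ?thesis using deg_rooted_subtree[OF S, of y] y by auto
  qed
  then show "leg S w" unfolding leg_def using w wv by auto
qed

lemma deepest_branch_legs:
  assumes S: "rooted_subtree S" and u: "u \<in> S" "u \<noteq> v"
    and deepest: "\<forall>u'\<in>S. u' \<noteq> v \<and> deg S E u' \<ge> 3 \<longrightarrow> dist S E v u' \<le> dist S E v u"
  shows "\<forall>w\<in>child_set u \<inter> S. leg S w"
proof (rule legs_below[OF S u(1)])
  fix y assume y: "y \<in> descendants u \<inter> S" "y \<noteq> u"
  then have "depth u < depth y" using depth_descendant_less by blast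
  then have "dist S E v u < dist S E v y" using dist_rooted_subtree[OF S] y u by simp
  then show "deg S E y < 3" using deepest y root_notin_descendants[OF u(2)] by fastforce
qed

lemma prune_step_diss_num:
  assumes S: "rooted_subtree S" and step: "prune_step E v S S'"
  shows "rooted_subtree S' \<and> (\<exists>k. \<forall>b. diss_num S b = diss_num S' b + k)"
proof -
  obtain u where u: "u \<in> S" "u \<noteq> v"
    and deepest: "\<forall>u'\<in>S. u' \<noteq> v \<and> deg S E u' \<ge> 3 \<longrightarrow> dist S E v u' \<le> dist S E v u"
    and S': "if card (children_mod S E v 2 u) \<ge> 1 \<or> card (children_mod S E v 1 u) \<ge> 2
        then S' = S - desc S E v u
        else (\<exists>z\<in>children S E v u. (children_mod S E v 1 u \<noteq> {} \<longrightarrow> z \<in> children_mod S E v 1 u)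
               \<and> S' = S - \<Union> (desc S E v ` (children S E v u - {z})))"
    using step unfolding prune_step_def by blast
  note legs = deepest_branch_legs[OF S u deepest]
  show ?thesis
  proof (cases "card (children_mod S E v 2 u) \<ge> 1 \<or> card (children_mod S E v 1 u) \<ge> 2")
    case True
    then have "S' = S - descendants u" using S' desc_rooted_subtree[OF S] by auto
    then show ?thesis
      using remove_branch[OF S u(1) legs u(2)] True unfolding children_mod_rooted_subtree[OF S u(1)] by simp
  next
    case False
    then obtain z where "z \<in> child_set u \<inter> S"
      "children_mod S E v 1 u \<noteq> {} \<longrightarrow> z \<in> children_mod S E v 1 u"
      and "S' = S - (\<Union>w\<in>child_set u \<inter> S - {z}. descendants w)"
      using S' unfolding children_rooted_subtree[OF S u(1)] desc_rooted_subtree[OF S] by auto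
    then show ?thesis
      using remove_siblings[OF S u(1) legs] False unfolding children_mod_rooted_subtree[OF S u(1)] by auto
  qed
qed

lemma prune_steps_diss_num:
  assumes "(prune_step E v)\<^sup>*\<^sup>* V S"
  shows "rooted_subtree S
    \<and> int (diss_num S True) - int (diss_num S False) = int (diss_num V True) - int (diss_num V False)"
  using assms
proof (induction rule: rtranclp_induct)
  case (step S1 S2)
  then obtain k where "diss_num S1 b = diss_num S2 b + k" for b
    using prune_step_diss_num by blast
  then show ?case using step prune_step_diss_num by auto
qed (use rooted_subtree_V in simp)

lemma pruned_diss_num_diff:
  assumes S: "rooted_subtree S" and no_branch: "\<not> (\<exists>u\<in>S. u \<noteq> v \<and> deg S E u \<ge> 3)"
  shows "int (diss_num S True) - int (diss_num S False) =
    1 + of_bool (card (children_mod S E v 1 v) \<ge> 1)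
      - int (card (children_mod S E v 1 v) + card (children_mod S E v 2 v))"
proof -
  have vS: "v \<in> S" using rooted_subtree_root[OF S] .
  have legs: "\<forall>w\<in>child_set v \<inter> S. leg S w"
    using no_branch root_notin_descendants by (intro legs_below[OF S vS]) fastforce
  have "finite (child_set v \<inter> S)" using finite_child_set by simp
  then show ?thesis
    using spider_diss_num[OF S vS legs refl] sum_path_diss_legs[OF S vS legs] ex_mod1_iff[OF S vS legs]
      card_mod3_nonzero[of "child_set v \<inter> S" "\<lambda>w. card (descendants w \<inter> S)"]
    unfolding children_mod_rooted_subtree[OF S vS] by simp
qed

lemma dissociation_set_iff: "dissociation_set V E F \<longleftrightarrow> F \<subseteq> V \<and> dissociated E F"
  unfolding dissociation_set_def dissociated_def by auto

lemma root_decided_iff: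
  "(\<forall>F. max_dissociation_set V E F \<longrightarrow> (v \<in> F \<longleftrightarrow> b)) \<longleftrightarrow> diss_num V (\<not> b) < diss_num V b"
proof -
  note diss = diss_num[OF finite_V root]
  obtain Fb where Fb: "Fb \<subseteq> V" "dissociated E Fb" "v \<in> Fb \<longleftrightarrow> b" "card Fb = diss_num V b"
    using diss(1) by blast
  obtain Fn where Fn: "Fn \<subseteq> V" "dissociated E Fn" "v \<in> Fn \<longleftrightarrow> \<not> b" "card Fn = diss_num V (\<not> b)"
    using diss(1) by blast
  have le_max: "card F \<le> max (diss_num V b) (diss_num V (\<not> b))" if "dissociation_set V E F" for F
    using that diss(2)[of F b] diss(2)[of F "\<not> b"] unfolding dissociation_set_iff by (cases "v \<in> F \<longleftrightarrow> b") auto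
  show ?thesis
  proof
    assume decided: "\<forall>F. max_dissociation_set V E F \<longrightarrow> (v \<in> F \<longleftrightarrow> b)"
    show "diss_num V (\<not> b) < diss_num V b"
    proof (rule ccontr)
      assume "\<not> ?thesis"
      then have "max_dissociation_set V E Fn"
        unfolding max_dissociation_set_def using Fn le_max dissociation_set_iff by fastforce
      then show False using decided Fn(3) by blast
    qed
  next
    assume less: "diss_num V (\<not> b) < diss_num V b"
    show "\<forall>F. max_dissociation_set V E F \<longrightarrow> (v \<in> F \<longleftrightarrow> b)"
    proof (intro allI impI)
      fix F assume F: "max_dissociation_set V E F"
      then have "card Fb \<le> card F" "F \<subseteq> V" "dissociated E F"
        using Fb unfolding max_dissociation_set_def dissociation_set_iff by auto
      then show "v \<in> F \<longleftrightarrow> b" using diss(2)[of F "\<not> b"] less Fb(4) by (cases "v \<in> F \<longleftrightarrow> b") auto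
    qed
  qed
qed

lemma root_in_A_set_iff: "v \<in> A_set V E \<longleftrightarrow> diss_num V False < diss_num V True"
  using root_decided_iff[of True] root unfolding A_set_def by simp

lemma root_in_N_set_iff: "v \<in> N_set V E \<longleftrightarrow> diss_num V True < diss_num V False"
  using root_decided_iff[of False] root unfolding N_set_def by simp

end

lemma sign_of_root_gain:
  fixes c1 c2 :: nat and d :: int
  assumes "d = 1 + of_bool (c1 \<ge> 1) - int (c1 + c2)"
  shows "(0 < d \<longleftrightarrow> c2 = 0 \<and> c1 \<le> 1) \<and> (d < 0 \<longleftrightarrow> c2 = 2 \<or> c1 + c2 \<ge> 3)"
  using assms by (cases "c1 \<ge> 1") auto

theorem theorem3p1:
  fixes V :: "'a set" and E :: "'a \<Rightarrow> 'a \<Rightarrow> bool" and v :: 'a and S :: "'a set"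
  assumes "is_tree V E" and "v \<in> V" and "is_pruning V E v S"
  shows "(v \<in> A_set V E \<longleftrightarrow>
            card (children_mod S E v 2 v) = 0 \<and> card (children_mod S E v 1 v) \<le> 1)
       \<and> (v \<in> N_set V E \<longleftrightarrow>
            card (children_mod S E v 2 v) = 2
            \<or> card (children_mod S E v 1 v) + card (children_mod S E v 2 v) \<ge> 3)"
proof -
  interpret rooted_tree V E v using assms(1,2) by unfold_locales
  have steps: "(prune_step E v)\<^sup>*\<^sup>* V S" and no_branch: "\<not> (\<exists>u\<in>S. u \<noteq> v \<and> deg S E u \<ge> 3)"
    using assms(3) unfolding is_pruning_def by auto
  then have S: "rooted_subtree S" using prune_steps_diss_num by blast
  define c1 where "c1 = card (children_mod S E v 1 v)"
  define c2 where "c2 = card (children_mod S E v 2 v)"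
  have "int (diss_num V True) - int (diss_num V False) = 1 + of_bool (c1 \<ge> 1) - int (c1 + c2)"
    using prune_steps_diss_num[OF steps] pruned_diss_num_diff[OF S no_branch] unfolding c1_def c2_def by simp
  then have "(0 < int (diss_num V True) - int (diss_num V False) \<longleftrightarrow> c2 = 0 \<and> c1 \<le> 1)
      \<and> (int (diss_num V True) - int (diss_num V False) < 0 \<longleftrightarrow> c2 = 2 \<or> c1 + c2 \<ge> 3)"
    by (rule sign_of_root_gain)
  then show ?thesis
    using root_in_A_set_iff root_in_N_set_iff unfolding c1_def c2_def by linarith
qed

end
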